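(* Let $\mathcal T$ be an orbital category. The poset $\mathrm{wIndSys}_{\mathcal T}$ is a lattice; meets are given by intersections ($(\mathcal C\wedge\mathcal D)_V=\mathcal C_V\cap\mathcal D_V$), and the join of weak indexing systems $\mathcal C,\mathcal D$ is $$\mathcal C\vee\mathcal D=\bigcup_{n\in\mathbb N}\big(\widehat{\mathrm{Cl}}_{\mathcal C}\widehat{\mathrm{Cl}}_{\mathcal D}\big)^{n}(\mathcal C\cup\mathcal D),$$ where $(\widehat{\mathrm{Cl}}_{\mathcal C}\widehat{\mathrm{Cl}}_{\mathcal D})^n$ denotes the $2n$-fold alternating composite $\widehat{\mathrm{Cl}}_{\mathcal C}\widehat{\mathrm{Cl}}_{\mathcal D}\cdots\widehat{\mathrm{Cl}}_{\mathcal C}\widehat{\mathrm{Cl}}_{\mathcal D}$.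
   Context: For a small category $\mathcal T$, $\mathbb F_{\mathcal T}$ is the full subcategory of $\mathrm{Fun}(\mathcal T^{op},\mathrm{Set})$ on finite coproducts of representables; $\mathcal T$ is orbital if $\mathbb F_{\mathcal T}$ has pullbacks. $\mathbb F_V:=\mathbb F_{\mathcal T,/V}$, $*_V$ terminal; for $U\to V$, $\mathrm{Res}^V_U$ is pullback and $\mathrm{Ind}^V_U$ postcomposition. A collection $\mathcal C$ assigns to each $V\in\mathcal T$ a class $\mathcal C_V$ of objects of $\mathbb F_V$; unions are taken pointwise. For $S\in\mathbb F_V$ with orbits $U\in\mathrm{Orb}(S)$ (each with its map $U\to V$) and $T_U\in\mathbb F_U$, $\coprod_U^ST_U:=\coprod_U\mathrm{Ind}_U^VT_U$. A full $\mathcal T$-subcategory is a collection of isomorphism-closed classes stable under restriction. A $\mathcal T$-weak indexing system is a full $\mathcal T$-subcategory $\mathcal C$ with $\mathcal C_V\neq\emptyset\Rightarrow *_V\in\mathcal C_V$ and closed under $\coprod^S_UT_U$ for $S\in\mathcal C_V$, $T_U\in\mathcal C_U$; $\mathrm{wIndSys}_{\mathcal T}$ is their poset under inclusion. For collections $\mathcal C,\mathcal E$: $\mathrm{Cl}_{\mathcal C,0}(\mathcal E)=\mathcal E$, $\mathrm{Cl}_{\mathcal C,n}(\mathcal E)_V=\{\coprod^S_UT_U\mid S\in\mathcal C_V,\ T_U\in\mathrm{Cl}_{\mathcal C,n-1}(\mathcal E)_U\ \forall U\}$, $\mathrm{Cl}_{\mathcal C}(\mathcal E)=\bigcup_n\mathrm{Cl}_{\mathcal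 C,n}(\mathcal E)$, and $\widehat{\mathrm{Cl}}_{\mathcal C}(\mathcal E):=\mathcal E\cup\mathrm{Cl}_{\mathcal C}(\mathcal E)$. *)

theory Defs
  imports Main
begin

text \<open>
A small category T is given by a set of objects Ob, hom-sets Hom X Y, composition
cmp g f (g after f) and identities idm.

F_T (full subcategory of presheaves on finite coproducts of representables) is modelled
by its standard equivalent description (free finite-coproduct completion, via Yoneda):
an object is a finite list of objects of T (the orbits), a morphism from [U_1..U_n] to
[W_1..W_m] is a list of pairs (j_i, h_i) with j_i < m and h_i in Hom U_i W_(j_i).

An object of F_V = F_T/V is a list of pairs (U_i, f_i) with f_i in Hom U_i V.
\<close>

definition category ::
  "'o set \<Rightarrow> ('o \<Rightarrow> 'o \<Rightarrow> 'm set) \<Rightarrow> ('m \<Rightarrow> 'm \<Rightarrow> 'm) \<Rightarrow> ('o \<Rightarrow> 'm) \<Rightarrow> bool" where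
  "category Ob Hom cmp idm \<longleftrightarrow>
     (\<forall>X\<in>Ob. idm X \<in> Hom X X) \<and>
     (\<forall>X\<in>Ob. \<forall>Y\<in>Ob. \<forall>Z\<in>Ob. \<forall>f\<in>Hom X Y. \<forall>g\<in>Hom Y Z. cmp g f \<in> Hom X Z) \<and>
     (\<forall>X\<in>Ob. \<forall>Y\<in>Ob. \<forall>f\<in>Hom X Y. cmp (idm Y) f = f \<and> cmp f (idm X) = f) \<and>
     (\<forall>W\<in>Ob. \<forall>X\<in>Ob. \<forall>Y\<in>Ob. \<forall>Z\<in>Ob. \<forall>f\<in>Hom W X. \<forall>g\<in>Hom X Y. \<forall>h\<in>Hom Y Z.
        cmp h (cmp g f) = cmp (cmp h g) f)"

locale cat_data =
  fixes Ob :: "'o set" and Hom :: "'o \<Rightarrow> 'o \<Rightarrow> 'm set"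
    and cmp :: "'m \<Rightarrow> 'm \<Rightarrow> 'm" and idm :: "'o \<Rightarrow> 'm"
begin

definition fobj :: "'o list \<Rightarrow> bool" where
  "fobj A \<longleftrightarrow> set A \<subseteq> Ob"

definition fmor :: "'o list \<Rightarrow> 'o list \<Rightarrow> (nat \<times> 'm) list set" where
  "fmor A B = {m. length m = length A \<and>
      (\<forall>i<length A. fst (m!i) < length B \<and> snd (m!i) \<in> Hom (A!i) (B ! fst (m!i)))}"

definition fcomp :: "(nat \<times> 'm) list \<Rightarrow> (nat \<times> 'm) list \<Rightarrow> (nat \<times> 'm) list" where
  "fcomp g f = map (\<lambda>(j,h). (fst (g!j), cmp (snd (g!j)) h)) f"

definition fid :: "'o list \<Rightarrow> (nat \<times> 'm) list" where
  "fid A = map (\<lambda>i. (i, idm (A!i))) [0..<length A]"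

definition is_pullback ::
  "'o list \<Rightarrow> 'o list \<Rightarrow> (nat \<times> 'm) list \<Rightarrow> (nat \<times> 'm) list \<Rightarrow>
   'o list \<Rightarrow> (nat \<times> 'm) list \<Rightarrow> (nat \<times> 'm) list \<Rightarrow> bool" where
  "is_pullback A B f g P p1 p2 \<longleftrightarrow>
     fobj P \<and> p1 \<in> fmor P A \<and> p2 \<in> fmor P B \<and> fcomp f p1 = fcomp g p2 \<and>
     (\<forall>Q q1 q2. fobj Q \<and> q1 \<in> fmor Q A \<and> q2 \<in> fmor Q B \<and> fcomp f q1 = fcomp g q2 \<longrightarrow>
        (\<exists>u\<in>fmor Q P. fcomp p1 u = q1 \<and> fcomp p2 u = q2 \<and>
           (\<forall>u'\<in>fmor Q P. fcomp p1 u' = q1 \<and> fcomp p2 u' = q2 \<longrightarrow> u' = u)))"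

definition orbital :: bool where
  "orbital \<longleftrightarrow>
     (\<forall>A B C f g. fobj A \<and> fobj B \<and> fobj C \<and> f \<in> fmor A C \<and> g \<in> fmor B C \<longrightarrow>
        (\<exists>P p1 p2. is_pullback A B f g P p1 p2))"

definition sobj :: "'o \<Rightarrow> ('o \<times> 'm) list \<Rightarrow> bool" where
  "sobj V S \<longleftrightarrow> (\<forall>(U,f)\<in>set S. U \<in> Ob \<and> f \<in> Hom U V)"

text \<open>structure map S \<rightarrow> *_V, viewed as a morphism of F_T into [V]\<close>
definition str :: "('o \<times> 'm) list \<Rightarrow> (nat \<times> 'm) list" where
  "str S = map (\<lambda>(U,f). (0, f)) S"

definition smor :: "('o \<times> 'm) list \<Rightarrow> ('o \<times> 'm) list \<Rightarrow> (nat \<times> 'm) list set" where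
  "smor S S' = {m. m \<in> fmor (map fst S) (map fst S') \<and> fcomp (str S') m = str S}"

definition siso :: "('o \<times> 'm) list \<Rightarrow> ('o \<times> 'm) list \<Rightarrow> bool" where
  "siso S S' \<longleftrightarrow> (\<exists>m\<in>smor S S'. \<exists>m'\<in>smor S' S.
       fcomp m' m = fid (map fst S) \<and> fcomp m m' = fid (map fst S'))"

definition terminal :: "'o \<Rightarrow> ('o \<times> 'm) list" where
  "terminal V = [(V, idm V)]"

text \<open>Ind along a : U \<rightarrow> V is postcomposition\<close>
definition Ind :: "'m \<Rightarrow> ('o \<times> 'm) list \<Rightarrow> ('o \<times> 'm) list" where
  "Ind a T = map (\<lambda>(W,g). (W, cmp a g)) T"

text \<open>\<Coprod>^S_U T_U = \<Coprod>_U Ind_U^V T_U, the orbits of S being the entries of the list S\<close>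
definition coprod_over :: "('o \<times> 'm) list \<Rightarrow> ('o \<times> 'm) list list \<Rightarrow> ('o \<times> 'm) list" where
  "coprod_over S Ts = concat (map2 (\<lambda>(U,f) T. Ind f T) S Ts)"

definition is_wIndSys :: "('o \<Rightarrow> ('o \<times> 'm) list set) \<Rightarrow> bool" where
  "is_wIndSys C \<longleftrightarrow>
     \<comment> \<open>a collection assigns classes to objects V of T only\<close>
     (\<forall>V. V \<notin> Ob \<longrightarrow> C V = {}) \<and>
     (\<forall>V\<in>Ob. \<forall>S\<in>C V. sobj V S) \<and>
     \<comment> \<open>isomorphism-closed\<close>
     (\<forall>V\<in>Ob. \<forall>S S'. S \<in> C V \<and> sobj V S' \<and> siso S S' \<longrightarrow> S' \<in> C V) \<and>
     \<comment> \<open>stable under restriction (pullback) along any U \<rightarrow> V\<close>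
     (\<forall>V\<in>Ob. \<forall>U\<in>Ob. \<forall>a\<in>Hom U V. \<forall>S\<in>C V. \<forall>P p1 p2.
        is_pullback (map fst S) [U] (str S) [(0,a)] P p1 p2 \<longrightarrow> zip P (map snd p2) \<in> C U) \<and>
     \<comment> \<open>contains the terminal object when nonempty\<close>
     (\<forall>V\<in>Ob. C V \<noteq> {} \<longrightarrow> terminal V \<in> C V) \<and>
     \<comment> \<open>closed under indexed coproducts\<close>
     (\<forall>V\<in>Ob. \<forall>S\<in>C V. \<forall>Ts. length Ts = length S \<and> (\<forall>i<length S. Ts!i \<in> C (fst (S!i)))
        \<longrightarrow> coprod_over S Ts \<in> C V)"

text \<open>One closure step: objects which are (i.e. are isomorphic to) \<Coprod>^S_U T_U with
S in C_V and T_U in E_U.\<close>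
definition Cl_step :: "('o \<Rightarrow> ('o \<times> 'm) list set) \<Rightarrow> ('o \<Rightarrow> ('o \<times> 'm) list set) \<Rightarrow>
    'o \<Rightarrow> ('o \<times> 'm) list set" where
  "Cl_step C E V = (if V \<in> Ob then
     {X. sobj V X \<and> (\<exists>S Ts. S \<in> C V \<and> length Ts = length S \<and>
            (\<forall>i<length S. Ts!i \<in> E (fst (S!i))) \<and> siso (coprod_over S Ts) X)}
     else {})"

fun Cl_n :: "('o \<Rightarrow> ('o \<times> 'm) list set) \<Rightarrow> nat \<Rightarrow> ('o \<Rightarrow> ('o \<times> 'm) list set) \<Rightarrow>
    'o \<Rightarrow> ('o \<times> 'm) list set" where
  "Cl_n C 0 E = E"
| "Cl_n C (Suc n) E = Cl_step C (Cl_n C n E)"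

definition Cl :: "('o \<Rightarrow> ('o \<times> 'm) list set) \<Rightarrow> ('o \<Rightarrow> ('o \<times> 'm) list set) \<Rightarrow>
    'o \<Rightarrow> ('o \<times> 'm) list set" where
  "Cl C E V = (\<Union>n. Cl_n C n E V)"

definition Cl_hat :: "('o \<Rightarrow> ('o \<times> 'm) list set) \<Rightarrow> ('o \<Rightarrow> ('o \<times> 'm) list set) \<Rightarrow>
    'o \<Rightarrow> ('o \<times> 'm) list set" where
  "Cl_hat C E V = E V \<union> Cl C E V"

definition join_formula :: "('o \<Rightarrow> ('o \<times> 'm) list set) \<Rightarrow> ('o \<Rightarrow> ('o \<times> 'm) list set) \<Rightarrow>
    'o \<Rightarrow> ('o \<times> 'm) list set" where
  "join_formula C D V = (\<Union>n. (((\<lambda>E. Cl_hat C (Cl_hat D E)) ^^ n) (\<lambda>W. C W \<union> D W)) V)"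

end

end

(*
  Meets are intersections, since every defining property of a weak indexing system passes to
  intersections.

  For the join J = \<Union>n (Cl_C Cl_D)^n (C \<union> D), each closure step preserves closure under
  isomorphisms and restrictions. This is where T being orbital enters: restricting \<Coprod>^S_U T_U
  along a : U \<rightarrow> V gives the coproduct indexed by the restriction S' of S whose summand at an orbit
  of S' is the restriction of T_U, for U the orbit of S below it. Pullback squares are checked on
  points, i.e. on morphisms out of representables. Closure of J under J-indexed coproducts is
  proved stage by stage: a coproduct indexed by X \<cong> \<Coprod>^S_U T_U is transported along the
  isomorphism and rebracketed as an S-indexed coproduct of T_U-indexed coproducts, so it suffices
  that S and the T_U index coproducts staying in J. Any weak indexing system containing C and D is
  closed under both closure operators, which gives minimality, and the stages of J are nonempty
  only where C or D is, which gives the terminal objects.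
*)

theory Submission
  imports Defs
begin

definition block_index :: "(nat \<Rightarrow> nat) \<Rightarrow> nat \<Rightarrow> nat \<Rightarrow> nat" where
  "block_index L i l = (\<Sum>j<i. L j) + l"

lemma length_concat_map_upt:
  "(\<And>j. j < n \<Longrightarrow> length (F j) = L j) \<Longrightarrow> length (concat (map F [0..<n])) = (\<Sum>j<n. L j)"
  by (induction n) auto

lemma block_index_less: "i < n \<Longrightarrow> l < L i \<Longrightarrow> block_index L i l < (\<Sum>j<n. L j)"
proof (induction n)
  case (Suc n)
  show ?case
  proof (cases "i < n")
    case False
    then have "i = n"
      using Suc.prems by simp
    then show ?thesis
      using Suc.prems by (simp add: block_index_def)
  qed (use Suc in simp)
qed simp

lemma nth_concat_block_index:
  assumes "\<And>j. j < n \<Longrightarrow> length (F j) = L j" "i < n" "l < L i"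
  shows "concat (map F [0..<n]) ! block_index L i l = F i ! l"
  using assms
proof (induction n)
  case (Suc n)
  have len: "length (concat (map F [0..<n])) = (\<Sum>j<n. L j)"
    using length_concat_map_upt[of n F L] Suc.prems(1) by simp
  show ?case
  proof (cases "i < n")
    case True
    then show ?thesis
      using Suc block_index_less[of i n l L] len by (simp add: nth_append)
  next
    case False
    then have "i = n"
      using Suc.prems(2) by simp
    then show ?thesis
      using len by (simp add: nth_append block_index_def)
  qed
qed simp

lemma block_indexE:
  assumes "k < (\<Sum>j<n. L j)"
  obtains i l where "i < n" "l < L i" "k = block_index L i l"
proof -
  have "\<exists>i<n. \<exists>l<L i. k = block_index L i l"
    using assms
  proof (induction n)
    case (Suc n)
    show ?case
    proof (cases "k < (\<Sum>j<n. L j)")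
      case True
      then show ?thesis
        using Suc.IH less_SucI by blast
    next
      case False
      then have "k = block_index L n (k - (\<Sum>j<n. L j))" "k - (\<Sum>j<n. L j) < L n"
        using Suc.prems by (auto simp: block_index_def)
      then show ?thesis
        by blast
    qed
  qed simp
  then show ?thesis
    using that by blast
qed

lemma block_index_inject:
  assumes "l < L i" "l' < L i'"
  shows "block_index L i l = block_index L i' l' \<longleftrightarrow> i = i' \<and> l = l'"
proof
  have less: "block_index L a b < block_index L a' b'" if "a < a'" "b < L a" for a a' b b'
  proof -
    have "block_index L a b < (\<Sum>j<Suc a. L j)"
      using that by (simp add: block_index_def)
    also have "\<dots> \<le> (\<Sum>j<a'. L j)"
      using that by (intro sum_mono2) auto
    also have "\<dots> \<le> block_index L a' b'"
      by (simp add: block_index_def)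
    finally show ?thesis .
  qed
  assume eq: "block_index L i l = block_index L i' l'"
  then have "i = i'"
    using less[of i i' l l'] less[of i' i l' l] assms by (metis linorder_neqE_nat less_irrefl)
  then show "i = i' \<and> l = l'"
    using eq by (simp add: block_index_def)
qed simp

lemma upt_block_index:
  "[0..<(\<Sum>j<n. L j)] = concat (map (\<lambda>i. map (block_index L i) [0..<L i]) [0..<n])"
proof (induction n)
  case (Suc n)
  let ?a = "\<Sum>j<n. L j"
  have "map (block_index L n) [0..<L n] = map (\<lambda>l. l + ?a) [0..<L n]"
    by (simp add: block_index_def add.commute)
  also have "\<dots> = [?a..<?a + L n]"
    by (simp add: map_add_upt add.commute)
  finally have "map (block_index L n) [0..<L n] = [?a..<?a + L n]" .
  moreover have "[0..<?a + L n] = [0..<?a] @ [?a..<?a + L n]"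
    by (rule upt_add_eq_append) simp
  ultimately show ?case
    using Suc.IH by simp
qed simp

lemma concat_map_concat: "concat (map G (concat xss)) = concat (map (\<lambda>xs. concat (map G xs)) xss)"
  by (induction xss) auto

subsection \<open>The category \<open>F_T\<close> seen through its points\<close>

locale orbital_category = cat_data Ob Hom cmp idm
  for Ob :: "'o set" and Hom :: "'o \<Rightarrow> 'o \<Rightarrow> 'm set"
    and cmp :: "'m \<Rightarrow> 'm \<Rightarrow> 'm" and idm :: "'o \<Rightarrow> 'm" +
  assumes category: "category Ob Hom cmp idm"
    and orbital: "orbital"
begin

lemma idm_hom: "X \<in> Ob \<Longrightarrow> idm X \<in> Hom X X"
  using category unfolding category_def by blast

lemma cmp_hom:
  "\<lbrakk>X \<in> Ob; Y \<in> Ob; Z \<in> Ob; f \<in> Hom X Y; g \<in> Hom Y Z\<rbrakk> \<Longrightarrow> cmp g f \<in> Hom X Z"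
  using category unfolding category_def by blast

lemma cmp_idm_left: "\<lbrakk>X \<in> Ob; Y \<in> Ob; f \<in> Hom X Y\<rbrakk> \<Longrightarrow> cmp (idm Y) f = f"
  using category unfolding category_def by blast

lemma cmp_idm_right: "\<lbrakk>X \<in> Ob; Y \<in> Ob; f \<in> Hom X Y\<rbrakk> \<Longrightarrow> cmp f (idm X) = f"
  using category unfolding category_def by blast

lemma cmp_assoc:
  "\<lbrakk>W \<in> Ob; X \<in> Ob; Y \<in> Ob; Z \<in> Ob; f \<in> Hom W X; g \<in> Hom X Y; h \<in> Hom Y Z\<rbrakk>
   \<Longrightarrow> cmp h (cmp g f) = cmp (cmp h g) f"
  using category unfolding category_def by blast

lemma orbitalD:
  "\<lbrakk>fobj A; fobj B; fobj C; f \<in> fmor A C; g \<in> fmor B C\<rbrakk> \<Longrightarrow> \<exists>P p1 p2. is_pullback A B f g P p1 p2"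
  using orbital unfolding orbital_def by blast

text \<open>By Yoneda, \<open>points W A\<close> is \<open>A(W) = F_T([W], A)\<close>, and \<open>pmap g\<close> is postcomposition
  with \<open>g\<close>.\<close>

definition points :: "'o \<Rightarrow> 'o list \<Rightarrow> (nat \<times> 'm) set" where
  "points W A = {p. fst p < length A \<and> snd p \<in> Hom W (A ! fst p)}"

definition pmap :: "(nat \<times> 'm) list \<Rightarrow> nat \<times> 'm \<Rightarrow> nat \<times> 'm" where
  "pmap g p = (fst (g ! fst p), cmp (snd (g ! fst p)) (snd p))"

lemma fobj_iff_nth: "fobj A \<longleftrightarrow> (\<forall>i<length A. A ! i \<in> Ob)"
  unfolding fobj_def by (auto simp: set_conv_nth)

lemma fobj_nth: "fobj A \<Longrightarrow> i < length A \<Longrightarrow> A ! i \<in> Ob"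
  using fobj_iff_nth by blast

lemma fobj_singleton: "V \<in> Ob \<Longrightarrow> fobj [V]"
  by (simp add: fobj_def)

lemma sobj_iff_nth:
  "sobj V S \<longleftrightarrow> (\<forall>i<length S. fst (S ! i) \<in> Ob \<and> snd (S ! i) \<in> Hom (fst (S ! i)) V)"
  unfolding sobj_def by (simp add: all_set_conv_all_nth case_prod_beta)

lemma fobj_map_fst: "sobj V S \<Longrightarrow> fobj (map fst S)"
  by (auto simp: fobj_iff_nth sobj_iff_nth)

lemma fcomp_eq_map_pmap: "fcomp g f = map (pmap g) f"
  unfolding fcomp_def pmap_def by (auto simp: case_prod_beta)

lemma fmor_iff_points:
  "m \<in> fmor A B \<longleftrightarrow> length m = length A \<and> (\<forall>i<length A. m ! i \<in> points (A ! i) B)"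
  unfolding fmor_def points_def by auto

lemma fmor_length: "m \<in> fmor A B \<Longrightarrow> length m = length A"
  by (simp add: fmor_iff_points)

lemma fmor_nth: "m \<in> fmor A B \<Longrightarrow> i < length A \<Longrightarrow> m ! i \<in> points (A ! i) B"
  by (simp add: fmor_iff_points)

lemma fcomp_nth: "f \<in> fmor A B \<Longrightarrow> i < length A \<Longrightarrow> fcomp g f ! i = pmap g (f ! i)"
  using fmor_length by (simp add: fcomp_eq_map_pmap)

lemma singleton_fmor: "x \<in> points W A \<Longrightarrow> [x] \<in> fmor [W] A"
  by (simp add: fmor_iff_points)

lemma fmor_singletonD: "u \<in> fmor [W] P \<Longrightarrow> u = [u ! 0] \<and> u ! 0 \<in> points W P"
  using fmor_nth[of u "[W]" P 0] fmor_length[of u "[W]" P] by (cases u) auto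

lemma hom_fmor_singleton: "a \<in> Hom U V \<Longrightarrow> [(0, a)] \<in> fmor [U] [V]"
  by (simp add: fmor_iff_points points_def)

lemma pmap_points:
  assumes "fobj A" "fobj B" "W \<in> Ob" "g \<in> fmor A B" "p \<in> points W A"
  shows "pmap g p \<in> points W B"
proof -
  have p: "fst p < length A" "snd p \<in> Hom W (A ! fst p)"
    using assms(5) by (auto simp: points_def)
  then have "fst (g ! fst p) < length B" "snd (g ! fst p) \<in> Hom (A ! fst p) (B ! fst (g ! fst p))"
    using fmor_nth[OF assms(4)] by (auto simp: points_def)
  with p assms(1-3) show ?thesis
    unfolding pmap_def points_def by (auto intro: cmp_hom fobj_nth)
qed

lemma pmap_pmap:
  assumes "fobj A" "fobj B" "fobj C" "W \<in> Ob" "f \<in> fmor A B" "g \<in> fmor B C" "p \<in> points W A"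
  shows "pmap g (pmap f p) = pmap (fcomp g f) p"
proof -
  obtain i h where p: "p = (i, h)" "i < length A" "h \<in> Hom W (A ! i)"
    using assms(7) by (cases p) (auto simp: points_def)
  obtain j u where f: "f ! i = (j, u)" "j < length B" "u \<in> Hom (A ! i) (B ! j)"
    using fmor_nth[OF assms(5) p(2)] by (cases "f ! i") (auto simp: points_def)
  obtain k v where g: "g ! j = (k, v)" "k < length C" "v \<in> Hom (B ! j) (C ! k)"
    using fmor_nth[OF assms(6) f(2)] by (cases "g ! j") (auto simp: points_def)
  have "cmp v (cmp u h) = cmp (cmp v u) h"
    using cmp_assoc[OF assms(4) fobj_nth[OF assms(1) p(2)] fobj_nth[OF assms(2) f(2)]
        fobj_nth[OF assms(3) g(2)] p(3) f(3) g(3)] .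
  then show ?thesis
    using fcomp_nth[OF assms(5) p(2)] p f g by (simp add: pmap_def)
qed

lemma fcomp_fmor:
  assumes "fobj A" "fobj B" "fobj C" "f \<in> fmor A B" "g \<in> fmor B C"
  shows "fcomp g f \<in> fmor A C"
  unfolding fmor_iff_points
proof (intro conjI allI impI)
  show "length (fcomp g f) = length A"
    using fmor_length[OF assms(4)] by (simp add: fcomp_eq_map_pmap)
  fix i assume i: "i < length A"
  show "fcomp g f ! i \<in> points (A ! i) C"
    using pmap_points[OF assms(2,3) fobj_nth[OF assms(1) i] assms(5) fmor_nth[OF assms(4) i]]
      fcomp_nth[OF assms(4) i] by simp
qed

lemma fcomp_assoc:
  assumes "fobj A" "fobj B" "fobj C" "fobj D" "f \<in> fmor A B" "g \<in> fmor B C" "h \<in> fmor C D"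
  shows "fcomp h (fcomp g f) = fcomp (fcomp h g) f"
proof (rule nth_equalityI)
  fix i assume "i < length (fcomp h (fcomp g f))"
  then have i: "i < length A"
    using fmor_length[OF assms(5)] by (simp add: fcomp_eq_map_pmap)
  then show "fcomp h (fcomp g f) ! i = fcomp (fcomp h g) f ! i"
    using pmap_pmap[OF assms(2-4) fobj_nth[OF assms(1) i] assms(6,7) fmor_nth[OF assms(5) i]]
      fmor_length[OF assms(5)] by (simp add: fcomp_eq_map_pmap)
qed (simp add: fcomp_eq_map_pmap)

lemma generic_point: "fobj A \<Longrightarrow> i < length A \<Longrightarrow> (i, idm (A ! i)) \<in> points (A ! i) A"
  unfolding points_def by (auto intro: idm_hom fobj_nth)

lemma pmap_generic_point:
  assumes "fobj A" "fobj B" "f \<in> fmor A B" "i < length A"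
  shows "pmap f (i, idm (A ! i)) = f ! i"
proof -
  obtain j u where f: "f ! i = (j, u)" "j < length B" "u \<in> Hom (A ! i) (B ! j)"
    using fmor_nth[OF assms(3,4)] by (cases "f ! i") (auto simp: points_def)
  then show ?thesis
    using cmp_idm_right[OF fobj_nth[OF assms(1,4)] fobj_nth[OF assms(2) f(2)] f(3)]
    by (simp add: pmap_def)
qed

lemma fid_nth: "i < length A \<Longrightarrow> fid A ! i = (i, idm (A ! i))"
  unfolding fid_def by simp

lemma length_fid [simp]: "length (fid A) = length A"
  unfolding fid_def by simp

lemma fid_fmor: "fobj A \<Longrightarrow> fid A \<in> fmor A A"
  by (simp add: fmor_iff_points fid_nth generic_point)

lemma pmap_fid: "fobj A \<Longrightarrow> W \<in> Ob \<Longrightarrow> p \<in> points W A \<Longrightarrow> pmap (fid A) p = p"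
  unfolding pmap_def points_def by (auto simp: fid_nth cmp_idm_left fobj_nth)

lemma fcomp_fid_left:
  assumes "fobj A" "fobj B" "f \<in> fmor A B"
  shows "fcomp (fid B) f = f"
  using pmap_fid[OF assms(2) fobj_nth[OF assms(1)] fmor_nth[OF assms(3)]] fmor_length[OF assms(3)]
  by (intro nth_equalityI) (auto simp: fcomp_eq_map_pmap)

lemma fcomp_fid_right: "fobj A \<Longrightarrow> fobj B \<Longrightarrow> f \<in> fmor A B \<Longrightarrow> fcomp f (fid A) = f"
  by (rule nth_equalityI) (auto simp: fcomp_eq_map_pmap fmor_length fid_nth pmap_generic_point)

lemma fmor_eqI:
  assumes "fobj A" "fobj B" "f \<in> fmor A B" "g \<in> fmor A B"
    and "\<And>W p. W \<in> Ob \<Longrightarrow> p \<in> points W A \<Longrightarrow> pmap f p = pmap g p"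
  shows "f = g"
proof (rule nth_equalityI)
  show "length f = length g"
    using assms(3,4) by (simp add: fmor_length)
  fix i assume "i < length f"
  then have i: "i < length A"
    using assms(3) by (simp add: fmor_length)
  then show "f ! i = g ! i"
    using assms(5)[OF fobj_nth[OF assms(1) i] generic_point[OF assms(1) i]]
      pmap_generic_point[OF assms(1,2,3) i] pmap_generic_point[OF assms(1,2,4) i] by simp
qed

lemma length_str [simp]: "length (str S) = length S"
  by (simp add: str_def)

lemma str_nth: "i < length S \<Longrightarrow> str S ! i = (0, snd (S ! i))"
  by (simp add: str_def case_prod_beta)

lemma str_fmor: "sobj V S \<Longrightarrow> str S \<in> fmor (map fst S) [V]"
  unfolding fmor_iff_points points_def by (auto simp: str_nth sobj_iff_nth)

lemma pmap_str: "fst p < length T \<Longrightarrow> pmap (str T) p = (0, cmp (snd (T ! fst p)) (snd p))"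
  by (simp add: pmap_def str_nth)

lemma pmap_singleton: "pmap [(0, a)] (0, h) = (0, cmp a h)"
  by (simp add: pmap_def)

lemma points_singleton_iff: "(j, h) \<in> points W [V] \<longleftrightarrow> j = 0 \<and> h \<in> Hom W V"
  by (auto simp: points_def)

text \<open>\<open>zip P (map snd p)\<close> is the object of \<open>F_U\<close> given by a morphism \<open>p : P \<rightarrow> [U]\<close> of \<open>F_T\<close>.\<close>

lemma str_zip:
  assumes "p \<in> fmor P [U]"
  shows "str (zip P (map snd p)) = p" and "map fst (zip P (map snd p)) = P"
proof -
  have "fst (p ! i) = 0" if "i < length P" for i
    using fmor_nth[OF assms that] by (auto simp: points_def)
  then show "str (zip P (map snd p)) = p"
    using fmor_length[OF assms] by (intro nth_equalityI) (auto simp: str_nth prod_eq_iff)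
  show "map fst (zip P (map snd p)) = P"
    using fmor_length[OF assms] by simp
qed

lemma sobj_zip:
  assumes "fobj P" "p \<in> fmor P [U]"
  shows "sobj U (zip P (map snd p))"
proof -
  have "snd (p ! i) \<in> Hom (P ! i) U" if "i < length P" for i
    using fmor_nth[OF assms(2) that] by (cases "p ! i") (simp add: points_singleton_iff)
  then show ?thesis
    using fmor_length[OF assms(2)] by (simp add: sobj_iff_nth fobj_nth[OF assms(1)])
qed

subsection \<open>Isomorphisms in \<open>F_V\<close>\<close>

lemma smor_iff: "m \<in> smor S S' \<longleftrightarrow> m \<in> fmor (map fst S) (map fst S') \<and> fcomp (str S') m = str S"
  unfolding smor_def by simp

lemma fcomp_smor:
  assumes "V \<in> Ob" "sobj V A" "sobj V B" "sobj V C" "m \<in> smor A B" "n \<in> smor B C"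
  shows "fcomp n m \<in> smor A C"
proof -
  have f: "fobj (map fst A)" "fobj (map fst B)" "fobj (map fst C)" "fobj [V]"
    using assms(1-4) fobj_map_fst fobj_singleton by auto
  have "fcomp (str C) (fcomp n m) = fcomp (fcomp (str C) n) m"
    using assms(5,6) fcomp_assoc[OF f _ _ str_fmor[OF assms(4)]] by (simp add: smor_iff)
  then show ?thesis
    using assms(5,6) fcomp_fmor[OF f(1-3)] by (simp add: smor_iff)
qed

lemma siso_bij_points:
  assumes "sobj V A" "sobj V B" "siso A B"
  obtains m where "m \<in> smor A B"
    and "\<And>W. W \<in> Ob \<Longrightarrow> bij_betw (pmap m) (points W (map fst A)) (points W (map fst B))"
proof -
  obtain m m' where m: "m \<in> smor A B" "m' \<in> smor B A"
    and inv: "fcomp m' m = fid (map fst A)" "fcomp m m' = fid (map fst B)"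
    using assms(3) unfolding siso_def by blast
  have f: "fobj (map fst A)" "fobj (map fst B)"
    using assms(1,2) fobj_map_fst by auto
  have mf: "m \<in> fmor (map fst A) (map fst B)" "m' \<in> fmor (map fst B) (map fst A)"
    using m by (auto simp: smor_iff)
  have "bij_betw (pmap m) (points W (map fst A)) (points W (map fst B))" if W: "W \<in> Ob" for W
  proof (rule bij_betw_byWitness[where f' = "pmap m'"])
    show "\<forall>a\<in>points W (map fst A). pmap m' (pmap m a) = a"
      using pmap_pmap[OF f(1,2,1) W mf] inv pmap_fid[OF f(1) W] by simp
    show "\<forall>a\<in>points W (map fst B). pmap m (pmap m' a) = a"
      using pmap_pmap[OF f(2,1,2) W mf(2,1)] inv pmap_fid[OF f(2) W] by simp
  qed (use pmap_points[OF f W mf(1)] pmap_points[OF f(2,1) W mf(2)] in blast)+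
  with m(1) that show ?thesis by blast
qed

text \<open>The inverse is assembled from the preimages of the generic points.\<close>

lemma fmor_inverse_if_bij_points:
  assumes A: "fobj A" and B: "fobj B" and m: "m \<in> fmor A B"
    and bij: "\<And>W. W \<in> Ob \<Longrightarrow> bij_betw (pmap m) (points W A) (points W B)"
  obtains m' where "m' \<in> fmor B A" "fcomp m' m = fid A" "fcomp m m' = fid B"
proof -
  define m' where "m' = map (\<lambda>j. inv_into (points (B ! j) A) (pmap m) (j, idm (B ! j)))
      [0..<length B]"
  have m'_nth: "m' ! j \<in> points (B ! j) A \<and> pmap m (m' ! j) = (j, idm (B ! j))"
    if j: "j < length B" for j
  proof -
    have b: "bij_betw (pmap m) (points (B ! j) A) (points (B ! j) B)"
      using bij[OF fobj_nth[OF B j]] .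
    then show ?thesis
      using j generic_point[OF B j] bij_betw_inv_into_right[OF b]
        inv_into_into[of _ "pmap m" "points (B ! j) A"] bij_betw_imp_surj_on[OF b]
      by (simp add: m'_def)
  qed
  have m': "m' \<in> fmor B A"
    using m'_nth by (simp add: fmor_iff_points m'_def)
  have right: "fcomp m m' = fid B"
    using m'_nth by (intro nth_equalityI) (auto simp: fcomp_eq_map_pmap fid_nth m'_def)
  have "fcomp m' m = fid A"
  proof (rule fmor_eqI[OF A A fcomp_fmor[OF A B A m m'] fid_fmor[OF A]])
    fix W p assume W: "W \<in> Ob" and p: "p \<in> points W A"
    have mp: "pmap m p \<in> points W B"
      using pmap_points[OF A B W m p] .
    have "pmap m (pmap m' (pmap m p)) = pmap m p"
      using pmap_pmap[OF B A B W m' m mp] right pmap_fid[OF B W mp] by simp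
    then have "pmap m' (pmap m p) = p"
      using bij[OF W] pmap_points[OF B A W m' mp] p unfolding bij_betw_def inj_on_def by blast
    then show "pmap (fcomp m' m) p = pmap (fid A) p"
      using pmap_pmap[OF A B A W m m' p] pmap_fid[OF A W p] by simp
  qed
  with m' right show ?thesis
    using that by blast
qed

lemma siso_if_bij_points:
  assumes V: "V \<in> Ob" and s: "sobj V A" "sobj V B" and m: "m \<in> smor A B"
    and bij: "\<And>W. W \<in> Ob \<Longrightarrow> bij_betw (pmap m) (points W (map fst A)) (points W (map fst B))"
  shows "siso A B"
proof -
  have f: "fobj (map fst A)" "fobj (map fst B)" "fobj [V]"
    using s V fobj_map_fst fobj_singleton by auto
  have mf: "m \<in> fmor (map fst A) (map fst B)" and ms: "fcomp (str B) m = str A"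
    using m by (simp_all add: smor_iff)
  obtain m' where m': "m' \<in> fmor (map fst B) (map fst A)"
    and inv: "fcomp m' m = fid (map fst A)" "fcomp m m' = fid (map fst B)"
    using fmor_inverse_if_bij_points[OF f(1,2) mf bij] .
  have "fcomp (str A) m' = fcomp (str B) (fcomp m m')"
    using fcomp_assoc[OF f(2,1,2,3) m' mf str_fmor[OF s(2)]] ms by simp
  also have "\<dots> = str B"
    using inv(2) fcomp_fid_right[OF f(2,3) str_fmor[OF s(2)]] by simp
  finally have "m' \<in> smor B A"
    using m' by (simp add: smor_iff)
  with m inv show ?thesis
    unfolding siso_def by blast
qed

lemma siso_refl:
  assumes "V \<in> Ob" "sobj V A"
  shows "siso A A"
proof -
  have f: "fobj (map fst A)" "fobj [V]"
    using assms fobj_map_fst fobj_singleton by auto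
  have "fid (map fst A) \<in> smor A A"
    using fid_fmor[OF f(1)] fcomp_fid_right[OF f str_fmor[OF assms(2)]] by (simp add: smor_iff)
  then show ?thesis
    using fcomp_fid_left[OF f(1) f(1) fid_fmor[OF f(1)]] unfolding siso_def by blast
qed

lemma siso_trans:
  assumes V: "V \<in> Ob" and s: "sobj V A" "sobj V B" "sobj V C" and "siso A B" "siso B C"
  shows "siso A C"
proof -
  have f: "fobj (map fst A)" "fobj (map fst B)" "fobj (map fst C)"
    using s fobj_map_fst by auto
  obtain m where m: "m \<in> smor A B"
    and bm: "\<And>W. W \<in> Ob \<Longrightarrow> bij_betw (pmap m) (points W (map fst A)) (points W (map fst B))"
    using siso_bij_points[OF s(1,2) \<open>siso A B\<close>] by blast
  obtain n where n: "n \<in> smor B C"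
    and bn: "\<And>W. W \<in> Ob \<Longrightarrow> bij_betw (pmap n) (points W (map fst B)) (points W (map fst C))"
    using siso_bij_points[OF s(2,3) \<open>siso B C\<close>] by blast
  show ?thesis
  proof (rule siso_if_bij_points[OF V s(1,3) fcomp_smor[OF V s m n]])
    fix W assume W: "W \<in> Ob"
    have mf: "m \<in> fmor (map fst A) (map fst B)" and nf: "n \<in> fmor (map fst B) (map fst C)"
      using m n by (simp_all add: smor_iff)
    have "bij_betw (pmap n \<circ> pmap m) (points W (map fst A)) (points W (map fst C))"
      using bij_betw_trans[OF bm[OF W] bn[OF W]] .
    moreover have "(pmap n \<circ> pmap m) p = pmap (fcomp n m) p" if "p \<in> points W (map fst A)" for p
      using pmap_pmap[OF f W mf nf that] by simp
    ultimately show "bij_betw (pmap (fcomp n m)) (points W (map fst A)) (points W (map fst C))"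
      using bij_betw_cong[of "points W (map fst A)" "pmap n \<circ> pmap m" "pmap (fcomp n m)"] by simp
  qed
qed

subsection \<open>Pointwise pullbacks\<close>

definition pointwise_pullback ::
  "'o list \<Rightarrow> 'o list \<Rightarrow> (nat \<times> 'm) list \<Rightarrow> (nat \<times> 'm) list \<Rightarrow>
   'o list \<Rightarrow> (nat \<times> 'm) list \<Rightarrow> (nat \<times> 'm) list \<Rightarrow> bool" where
  "pointwise_pullback A B f g P p1 p2 \<longleftrightarrow>
     fobj P \<and> p1 \<in> fmor P A \<and> p2 \<in> fmor P B \<and> fcomp f p1 = fcomp g p2 \<and>
     (\<forall>W\<in>Ob. \<forall>x\<in>points W A. \<forall>y\<in>points W B. pmap f x = pmap g y \<longrightarrow>
        (\<exists>!z. z \<in> points W P \<and> pmap p1 z = x \<and> pmap p2 z = y))"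

lemma pointwise_pullbackD:
  assumes "pointwise_pullback A B f g P p1 p2"
  shows "fobj P" "p1 \<in> fmor P A" "p2 \<in> fmor P B" "fcomp f p1 = fcomp g p2"
    "\<And>W x y. \<lbrakk>W \<in> Ob; x \<in> points W A; y \<in> points W B; pmap f x = pmap g y\<rbrakk>
      \<Longrightarrow> \<exists>!z. z \<in> points W P \<and> pmap p1 z = x \<and> pmap p2 z = y"
  using assms unfolding pointwise_pullback_def by blast+

lemma is_pullback_pointwise:
  assumes pb: "is_pullback A B f g P p1 p2"
  shows "pointwise_pullback A B f g P p1 p2"
  unfolding pointwise_pullback_def
proof (intro conjI ballI impI)
  show "fobj P" "p1 \<in> fmor P A" "p2 \<in> fmor P B" "fcomp f p1 = fcomp g p2"
    using pb unfolding is_pullback_def by auto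
  fix W x y assume W: "W \<in> Ob" and x: "x \<in> points W A" and y: "y \<in> points W B"
    and xy: "pmap f x = pmap g y"
  have "fcomp f [x] = fcomp g [y]"
    using xy by (simp add: fcomp_eq_map_pmap)
  then obtain u where u: "u \<in> fmor [W] P" "fcomp p1 u = [x]" "fcomp p2 u = [y]"
    and uniq: "\<forall>u'\<in>fmor [W] P. fcomp p1 u' = [x] \<and> fcomp p2 u' = [y] \<longrightarrow> u' = u"
    using pb fobj_singleton[OF W] singleton_fmor[OF x] singleton_fmor[OF y]
    unfolding is_pullback_def by meson
  have u0: "u = [u ! 0]" "u ! 0 \<in> points W P"
    using fmor_singletonD[OF u(1)] by auto
  show "\<exists>!z. z \<in> points W P \<and> pmap p1 z = x \<and> pmap p2 z = y"
  proof (rule ex1I[of _ "u ! 0"])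
    show "u ! 0 \<in> points W P \<and> pmap p1 (u ! 0) = x \<and> pmap p2 (u ! 0) = y"
      using u0 u(2,3) by (metis fcomp_eq_map_pmap list.inject list.simps(8,9))
    fix z assume "z \<in> points W P \<and> pmap p1 z = x \<and> pmap p2 z = y"
    then have "[z] = u"
      using uniq singleton_fmor[of z W P] by (simp add: fcomp_eq_map_pmap)
    then show "z = u ! 0"
      by auto
  qed
qed

lemma pointwise_pullback_commutes:
  assumes pb: "pointwise_pullback A B f g P p1 p2" and "fobj A" "fobj B" "fobj C" "W \<in> Ob"
    and "f \<in> fmor A C" "g \<in> fmor B C" "w \<in> points W P"
  shows "pmap f (pmap p1 w) = pmap g (pmap p2 w)"
proof -
  note pb = pointwise_pullbackD[OF pb]
  have "pmap f (pmap p1 w) = pmap (fcomp f p1) w"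
    using pmap_pmap[OF pb(1) assms(2,4,5) pb(2) assms(6,8)] .
  also have "\<dots> = pmap (fcomp g p2) w"
    using pb(4) by simp
  also have "\<dots> = pmap g (pmap p2 w)"
    using pmap_pmap[OF pb(1) assms(3,4,5) pb(3) assms(7,8)] by simp
  finally show ?thesis .
qed

text \<open>The universal property of \<open>F_T\<close>-pullbacks, recovered from points by evaluating at the
  generic points of the orbits of \<open>Q\<close>.\<close>

lemma pointwise_pullback_lift:
  assumes pb: "pointwise_pullback A B f g P p1 p2" and "fobj A" "fobj B" "fobj C" "fobj Q"
    and "f \<in> fmor A C" "g \<in> fmor B C" "q1 \<in> fmor Q A" "q2 \<in> fmor Q B"
    and comm: "fcomp f q1 = fcomp g q2"
  obtains m where "m \<in> fmor Q P" "fcomp p1 m = q1" "fcomp p2 m = q2"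
proof -
  note pb = pointwise_pullbackD[OF pb]
  define m where
    "m = map (\<lambda>e. THE z. z \<in> points (Q ! e) P \<and> pmap p1 z = q1 ! e \<and> pmap p2 z = q2 ! e)
      [0..<length Q]"
  have m_nth: "m ! e \<in> points (Q ! e) P \<and> pmap p1 (m ! e) = q1 ! e \<and> pmap p2 (m ! e) = q2 ! e"
    if e: "e < length Q" for e
  proof -
    have "pmap f (q1 ! e) = pmap g (q2 ! e)"
      using comm fcomp_nth[OF assms(8) e] fcomp_nth[OF assms(9) e] by metis
    then have "\<exists>!z. z \<in> points (Q ! e) P \<and> pmap p1 z = q1 ! e \<and> pmap p2 z = q2 ! e"
      using pb(5) fobj_nth[OF assms(5) e] fmor_nth[OF assms(8) e] fmor_nth[OF assms(9) e] by blast
    from theI'[OF this] show ?thesis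
      using e by (simp add: m_def)
  qed
  have "m \<in> fmor Q P"
    using m_nth by (simp add: fmor_iff_points m_def)
  moreover have "fcomp p1 m = q1" "fcomp p2 m = q2"
    using m_nth fmor_length[OF assms(8)] fmor_length[OF assms(9)]
    by (auto intro!: nth_equalityI simp: fcomp_eq_map_pmap m_def)
  ultimately show ?thesis
    using that by blast
qed

lemma pointwise_pullback_bij_points:
  assumes pb: "pointwise_pullback A B f g P p1 p2" and pb': "pointwise_pullback A B f g Q q1 q2"
    and obs: "fobj A" "fobj B" "fobj C" and W: "W \<in> Ob" and fg: "f \<in> fmor A C" "g \<in> fmor B C"
    and m: "m \<in> fmor P Q" "fcomp q1 m = p1" "fcomp q2 m = p2"
  shows "bij_betw (pmap m) (points W P) (points W Q)"
proof -
  note P = pointwise_pullbackD[OF pb] and Q = pointwise_pullbackD[OF pb']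
  have legs: "pmap q1 (pmap m z) = pmap p1 z" "pmap q2 (pmap m z) = pmap p2 z"
    if "z \<in> points W P" for z
    using pmap_pmap[OF P(1) Q(1) obs(1) W m(1) Q(2) that]
      pmap_pmap[OF P(1) Q(1) obs(2) W m(1) Q(3) that]
      m(2,3) by auto
  show ?thesis
    unfolding bij_betw_def inj_on_def
  proof (intro conjI ballI impI equalityI subsetI)
    fix z z' assume z: "z \<in> points W P" "z' \<in> points W P" and "pmap m z = pmap m z'"
    then have "pmap p1 z' = pmap p1 z" "pmap p2 z' = pmap p2 z"
      using legs by metis+
    moreover have "pmap f (pmap p1 z) = pmap g (pmap p2 z)"
      using pointwise_pullback_commutes[OF pb obs W fg z(1)] .
    ultimately show "z = z'"
      using P(5)[OF W pmap_points[OF P(1) obs(1) W P(2) z(1)]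
        pmap_points[OF P(1) obs(2) W P(3) z(1)]] z
      by blast
  next
    fix w assume "w \<in> pmap m ` points W P"
    then show "w \<in> points W Q"
      using pmap_points[OF P(1) Q(1) W m(1)] by blast
  next
    fix w assume w: "w \<in> points W Q"
    have x: "pmap q1 w \<in> points W A" "pmap q2 w \<in> points W B"
      using pmap_points[OF Q(1) obs(1) W Q(2) w] pmap_points[OF Q(1) obs(2) W Q(3) w] .
    have xy: "pmap f (pmap q1 w) = pmap g (pmap q2 w)"
      using pointwise_pullback_commutes[OF pb' obs W fg w] .
    obtain z where z: "z \<in> points W P" "pmap p1 z = pmap q1 w" "pmap p2 z = pmap q2 w"
      using P(5)[OF W x xy] by blast
    have "pmap m z = w"
      using Q(5)[OF W x xy] w z legs[OF z(1)] pmap_points[OF P(1) Q(1) W m(1) z(1)] by metis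
    then show "w \<in> pmap m ` points W P"
      using z(1) by blast
  qed
qed

lemma pointwise_pullback_iso:
  assumes pb: "pointwise_pullback A B f g P p1 p2" and "fobj A" "fobj A'" "fobj B" "fobj C"
    and m: "m \<in> fmor A A'" "m' \<in> fmor A' A" "fcomp m' m = fid A" "fcomp m m' = fid A'"
    and f': "f' \<in> fmor A' C" "fcomp f' m = f" and "g \<in> fmor B C"
  shows "pointwise_pullback A' B f' g P (fcomp m p1) p2"
proof -
  note pb = pointwise_pullbackD[OF pb]
  show ?thesis
    unfolding pointwise_pullback_def
  proof (intro conjI ballI impI)
    show "fobj P" "p2 \<in> fmor P B"
      using pb by auto
    show "fcomp m p1 \<in> fmor P A'"
      using fcomp_fmor[OF pb(1) assms(2,3) pb(2) m(1)] .
    show "fcomp f' (fcomp m p1) = fcomp g p2"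
      using fcomp_assoc[OF pb(1) assms(2,3,5) pb(2) m(1) f'(1)] f'(2) pb(4) by simp
    fix W x y assume W: "W \<in> Ob" and x: "x \<in> points W A'" and y: "y \<in> points W B"
      and xy: "pmap f' x = pmap g y"
    have x': "pmap m' x \<in> points W A"
      using pmap_points[OF assms(3,2) W m(2) x] .
    have mm'x: "pmap m (pmap m' x) = x"
      using pmap_pmap[OF assms(3,2,3) W m(2,1) x] m(4) pmap_fid[OF assms(3) W x] by simp
    have "pmap f (pmap m' x) = pmap g y"
      using pmap_pmap[OF assms(2,3,5) W m(1) f'(1) x'] f'(2) mm'x xy by simp
    then have ex: "\<exists>!z. z \<in> points W P \<and> pmap p1 z = pmap m' x \<and> pmap p2 z = y"
      using pb(5)[OF W x' y] by blast
    have p1_iff: "pmap (fcomp m p1) z = x \<longleftrightarrow> pmap p1 z = pmap m' x" if z: "z \<in> points W P" for z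
    proof
      have p1z: "pmap p1 z \<in> points W A"
        using pmap_points[OF pb(1) assms(2) W pb(2) z] .
      assume "pmap (fcomp m p1) z = x"
      then have "pmap m' (pmap m (pmap p1 z)) = pmap m' x"
        using pmap_pmap[OF pb(1) assms(2,3) W pb(2) m(1) z] by simp
      then show "pmap p1 z = pmap m' x"
        using pmap_pmap[OF assms(2,3,2) W m(1,2) p1z] m(3) pmap_fid[OF assms(2) W p1z] by simp
    next
      assume "pmap p1 z = pmap m' x"
      then show "pmap (fcomp m p1) z = x"
        using pmap_pmap[OF pb(1) assms(2,3) W pb(2) m(1) z] mm'x by simp
    qed
    show "\<exists>!z. z \<in> points W P \<and> pmap (fcomp m p1) z = x \<and> pmap p2 z = y"
      using ex p1_iff by blast
  qed
qed

lemma pointwise_pullback_paste: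
  assumes pb1: "pointwise_pullback A B f g P q1 q2" and pb2: "pointwise_pullback A' P h q1 Y y1 y2"
    and "fobj A" "fobj A'" "fobj B" "fobj C"
    and "f \<in> fmor A C" "g \<in> fmor B C" "h \<in> fmor A' A"
  shows "pointwise_pullback A' B (fcomp f h) g Y y1 (fcomp q2 y2)"
proof -
  note P = pointwise_pullbackD[OF pb1] and Y = pointwise_pullbackD[OF pb2]
  show ?thesis
    unfolding pointwise_pullback_def
  proof (intro conjI ballI impI)
    show "fobj Y" "y1 \<in> fmor Y A'"
      using Y by auto
    show "fcomp q2 y2 \<in> fmor Y B"
      using fcomp_fmor[OF Y(1) P(1) assms(5) Y(3) P(3)] .
    have "fcomp (fcomp f h) y1 = fcomp f (fcomp h y1)"
      using fcomp_assoc[OF Y(1) assms(4,3,6) Y(2) assms(9,7)] by simp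
    also have "\<dots> = fcomp (fcomp f q1) y2"
      using Y(4) fcomp_assoc[OF Y(1) P(1) assms(3,6) Y(3) P(2) assms(7)] by simp
    also have "\<dots> = fcomp g (fcomp q2 y2)"
      using P(4) fcomp_assoc[OF Y(1) P(1) assms(5,6) Y(3) P(3) assms(8)] by simp
    finally show "fcomp (fcomp f h) y1 = fcomp g (fcomp q2 y2)" .
    fix W x y assume W: "W \<in> Ob" and x: "x \<in> points W A'" and y: "y \<in> points W B"
      and xy: "pmap (fcomp f h) x = pmap g y"
    have hx: "pmap h x \<in> points W A"
      using pmap_points[OF assms(4,3) W assms(9) x] .
    have "pmap f (pmap h x) = pmap g y"
      using xy pmap_pmap[OF assms(4,3,6) W assms(9,7) x] by simp
    then obtain w where w: "w \<in> points W P" "pmap q1 w = pmap h x" "pmap q2 w = y"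
      and w_uniq: "\<And>w'. w' \<in> points W P \<and> pmap q1 w' = pmap h x \<and> pmap q2 w' = y \<Longrightarrow> w' = w"
      using P(5)[OF W hx y] by metis
    obtain z where z: "z \<in> points W Y" "pmap y1 z = x" "pmap y2 z = w"
      and z_uniq: "\<And>z'. z' \<in> points W Y \<and> pmap y1 z' = x \<and> pmap y2 z' = w \<Longrightarrow> z' = z"
      using Y(5)[OF W x w(1)] w(2) by metis
    have y2_legs: "pmap (fcomp q2 y2) z' = pmap q2 (pmap y2 z')" if "z' \<in> points W Y" for z'
      using pmap_pmap[OF Y(1) P(1) assms(5) W Y(3) P(3) that] by simp
    show "\<exists>!z. z \<in> points W Y \<and> pmap y1 z = x \<and> pmap (fcomp q2 y2) z = y"
    proof (rule ex1I[of _ z])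
      show "z \<in> points W Y \<and> pmap y1 z = x \<and> pmap (fcomp q2 y2) z = y"
        using z w y2_legs by simp
      fix z' assume z': "z' \<in> points W Y \<and> pmap y1 z' = x \<and> pmap (fcomp q2 y2) z' = y"
      have "pmap q1 (pmap y2 z') = pmap h x"
        using pointwise_pullback_commutes[OF pb2 assms(4) P(1) assms(3) W assms(9) P(2)] z' by metis
      then have "pmap y2 z' = w"
        using w_uniq pmap_points[OF Y(1) P(1) W Y(3)] z' y2_legs by metis
      then show "z' = z"
        using z_uniq z' by blast
    qed
  qed
qed

lemma pointwise_pullback_bij_base_change:
  assumes pb: "pointwise_pullback A B f g P p1 p2" and obs: "fobj A" "fobj B" "fobj C"
    and W: "W \<in> Ob" and fg: "f \<in> fmor A C" "g \<in> fmor B C"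
    and bij: "bij_betw (pmap g) (points W B) (points W C)"
  shows "bij_betw (pmap p1) (points W P) (points W A)"
proof -
  note P = pointwise_pullbackD[OF pb]
  have comm: "pmap f (pmap p1 z) = pmap g (pmap p2 z)" if "z \<in> points W P" for z
    using pointwise_pullback_commutes[OF pb obs W fg that] .
  show ?thesis
    unfolding bij_betw_def inj_on_def
  proof (intro conjI ballI impI equalityI subsetI)
    fix z z' assume z: "z \<in> points W P" "z' \<in> points W P" and eq: "pmap p1 z = pmap p1 z'"
    have "pmap g (pmap p2 z) = pmap g (pmap p2 z')"
      using comm[OF z(1)] comm[OF z(2)] eq by simp
    then have "pmap p2 z = pmap p2 z'"
      using bij pmap_points[OF P(1) obs(2) W P(3)] z unfolding bij_betw_def inj_on_def by blast
    then show "z = z'"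
      using P(5)[OF W pmap_points[OF P(1) obs(1) W P(2) z(1)]
        pmap_points[OF P(1) obs(2) W P(3) z(1)]
          comm[OF z(1)]] z eq by metis
  next
    fix x assume "x \<in> pmap p1 ` points W P"
    then show "x \<in> points W A"
      using pmap_points[OF P(1) obs(1) W P(2)] by blast
  next
    fix x assume x: "x \<in> points W A"
    have "pmap f x \<in> pmap g ` points W B"
      using bij pmap_points[OF obs(1,3) W fg(1) x] unfolding bij_betw_def by blast
    then obtain y where y: "y \<in> points W B" "pmap f x = pmap g y"
      by blast
    then show "x \<in> pmap p1 ` points W P"
      using P(5)[OF W x y] by blast
  qed
qed

definition is_restriction :: "'o \<Rightarrow> 'm \<Rightarrow> ('o \<times> 'm) list \<Rightarrow> ('o \<times> 'm) list \<Rightarrow> bool" where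
  "is_restriction U a X Y \<longleftrightarrow>
     (\<exists>p. pointwise_pullback (map fst X) [U] (str X) [(0, a)] (map fst Y) p (str Y))"

lemma restriction_pullback_exists:
  assumes "V \<in> Ob" "U \<in> Ob" "a \<in> Hom U V" "sobj V X"
  shows "\<exists>P p1 p2. is_pullback (map fst X) [U] (str X) [(0, a)] P p1 p2"
  using orbitalD[OF fobj_map_fst[OF assms(4)] fobj_singleton fobj_singleton str_fmor[OF assms(4)]
      hom_fmor_singleton[OF assms(3)]] assms(1,2) by blast

lemma is_pullback_restriction:
  assumes "is_pullback (map fst X) [U] (str X) [(0, a)] P p1 p2"
  shows "is_restriction U a X (zip P (map snd p2))" and "sobj U (zip P (map snd p2))"
proof -
  note pb = is_pullback_pointwise[OF assms]
  note P = pointwise_pullbackD[OF pb]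
  show "is_restriction U a X (zip P (map snd p2))"
    using pb str_zip[OF P(3)] unfolding is_restriction_def by auto
  show "sobj U (zip P (map snd p2))"
    using sobj_zip[OF P(1,3)] .
qed

lemma restriction_siso:
  assumes "V \<in> Ob" "U \<in> Ob" "a \<in> Hom U V" "sobj V X" "sobj V X'" "siso X X'"
    and "is_restriction U a X Y"
  shows "is_restriction U a X' Y"
proof -
  obtain p where pb: "pointwise_pullback (map fst X) [U] (str X) [(0, a)] (map fst Y) p (str Y)"
    using assms(7) unfolding is_restriction_def by blast
  obtain m m' where m: "m \<in> smor X X'" "m' \<in> smor X' X"
    and inv: "fcomp m' m = fid (map fst X)" "fcomp m m' = fid (map fst X')"
    using assms(6) unfolding siso_def by blast
  have "pointwise_pullback (map fst X') [U] (str X') [(0, a)] (map fst Y) (fcomp m p) (str Y)"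
    using pointwise_pullback_iso[OF pb fobj_map_fst[OF assms(4)] fobj_map_fst[OF assms(5)]
        fobj_singleton[OF assms(2)] fobj_singleton[OF assms(1)] _ _ inv str_fmor[OF assms(5)] _
        hom_fmor_singleton[OF assms(3)]] m
    by (simp add: smor_iff)
  then show ?thesis
    unfolding is_restriction_def by blast
qed

lemma restriction_unique:
  assumes V: "V \<in> Ob" and U: "U \<in> Ob" and a: "a \<in> Hom U V"
    and s: "sobj V X" "sobj U Y" "sobj U Z"
    and "is_restriction U a X Y" "is_restriction U a X Z"
  shows "siso Y Z"
proof -
  obtain py where pbY: "pointwise_pullback (map fst X) [U] (str X) [(0, a)] (map fst Y) py (str Y)"
    using assms(7) unfolding is_restriction_def by blast
  obtain pz where pbZ: "pointwise_pullback (map fst X) [U] (str X) [(0, a)] (map fst Z) pz (str Z)"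
    using assms(8) unfolding is_restriction_def by blast
  note Y = pointwise_pullbackD[OF pbY]
  have obs: "fobj (map fst X)" "fobj [U]" "fobj [V]"
    using s(1) U V fobj_map_fst fobj_singleton by auto
  obtain m where m: "m \<in> fmor (map fst Y) (map fst Z)" "fcomp pz m = py" "fcomp (str Z) m = str Y"
    using pointwise_pullback_lift[OF pbZ obs Y(1) str_fmor[OF s(1)] hom_fmor_singleton[OF a]
      Y(2,3,4)] .
  show ?thesis
  proof (rule siso_if_bij_points[OF U s(2,3)])
    show "m \<in> smor Y Z"
      using m by (simp add: smor_iff)
    show "bij_betw (pmap m) (points W (map fst Y)) (points W (map fst Z))" if "W \<in> Ob" for W
      using pointwise_pullback_bij_points[OF pbY pbZ obs that str_fmor[OF s(1)]
        hom_fmor_singleton[OF a] m] .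
  qed
qed

subsection \<open>Coproducts of blocks\<close>

lemma fmor_append:
  assumes f: "f \<in> fmor A B" and f': "f' \<in> fmor A' B"
  shows "f @ f' \<in> fmor (A @ A') B"
  unfolding fmor_iff_points
proof (intro conjI allI impI)
  show "length (f @ f') = length (A @ A')"
    using fmor_length[OF f] fmor_length[OF f'] by simp
  fix i assume i: "i < length (A @ A')"
  show "(f @ f') ! i \<in> points ((A @ A') ! i) B"
  proof (cases "i < length A")
    case True
    then show ?thesis
      using fmor_nth[OF f True] fmor_length[OF f] by (simp add: nth_append)
  next
    case False
    then show ?thesis
      using fmor_nth[OF f', of "i - length A"] i fmor_length[OF f] by (simp add: nth_append)
  qed
qed

lemma fmor_concat:
  "(\<And>k. k < n \<Longrightarrow> F k \<in> fmor (A k) B) \<Longrightarrow> concat (map F [0..<n]) \<in> fmor (concat (map A [0..<n])) B"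
proof (induction n)
  case 0
  then show ?case
    by (simp add: fmor_iff_points)
next
  case (Suc n)
  then show ?case
    by (simp add: fmor_append)
qed

lemma fcomp_concat: "fcomp g (concat xs) = concat (map (fcomp g) xs)"
  by (induction xs) (auto simp: fcomp_eq_map_pmap)

lemma pmap_concat_block_index:
  assumes "\<And>j. j < n \<Longrightarrow> length (F j) = L j" "k < n" "l < L k"
  shows "pmap (concat (map F [0..<n])) (block_index L k l, h) = pmap (F k) (l, h)"
  using nth_concat_block_index[of n F L, OF assms] by (simp add: pmap_def)

text \<open>A list \<open>R\<close> of objects \<open>R ! i \<in> F_{S ! i}\<close> gives the object \<open>blocks_obj R\<close> of \<open>F_T\<close>,
  their coproduct, with the map \<open>blocks_map R\<close> onto \<open>S\<close> sending the \<open>i\<close>-th block to the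
  \<open>i\<close>-th orbit. The structure map of \<open>\<Coprod>^S_U R_U\<close> factors through it.\<close>

definition blocks_obj :: "('o \<times> 'm) list list \<Rightarrow> 'o list" where
  "blocks_obj R = concat (map (\<lambda>i. map fst (R ! i)) [0..<length R])"

definition blocks_map :: "('o \<times> 'm) list list \<Rightarrow> (nat \<times> 'm) list" where
  "blocks_map R = concat (map (\<lambda>i. map (\<lambda>p. (i, snd p)) (R ! i)) [0..<length R])"

definition block_point :: "('o \<times> 'm) list list \<Rightarrow> nat \<Rightarrow> nat \<times> 'm \<Rightarrow> nat \<times> 'm" where
  "block_point R i p = (block_index (\<lambda>i. length (R ! i)) i (fst p), snd p)"

lemma length_blocks_obj: "length (blocks_obj R) = (\<Sum>j<length R. length (R ! j))"
  unfolding blocks_obj_def by (rule length_concat_map_upt) simp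

lemma blocks_obj_nth:
  "i < length R \<Longrightarrow> j < length (R ! i) \<Longrightarrow>
   blocks_obj R ! block_index (\<lambda>i. length (R ! i)) i j = fst (R ! i ! j)"
  unfolding blocks_obj_def by (subst nth_concat_block_index[where L = "\<lambda>i. length (R ! i)"]) auto

lemma fobj_blocks_obj:
  assumes "\<forall>i<length R. sobj (S ! i) (R ! i)"
  shows "fobj (blocks_obj R)"
  using assms unfolding fobj_def blocks_obj_def sobj_def by fastforce

lemma blocks_map_fmor:
  assumes "length R = length S" "\<forall>i<length R. sobj (S ! i) (R ! i)"
  shows "blocks_map R \<in> fmor (blocks_obj R) S"
  unfolding blocks_map_def blocks_obj_def
  using assms by (intro fmor_concat) (auto simp: fmor_iff_points points_def sobj_iff_nth)

lemma block_point_points: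
  assumes "i < length R" "p \<in> points W (map fst (R ! i))"
  shows "block_point R i p \<in> points W (blocks_obj R)"
  using assms block_index_less[of i "length R" "fst p" "\<lambda>i. length (R ! i)"]
  by (auto simp: points_def block_point_def blocks_obj_nth length_blocks_obj)

lemma points_blocks_objE:
  assumes "p \<in> points W (blocks_obj R)"
  obtains i p' where "i < length R" "p' \<in> points W (map fst (R ! i))" "p = block_point R i p'"
proof -
  obtain i j where ij: "i < length R" "j < length (R ! i)"
    "fst p = block_index (\<lambda>i. length (R ! i)) i j"
    using assms block_indexE[of "fst p" "\<lambda>i. length (R ! i)" "length R"]
    by (auto simp: points_def length_blocks_obj)
  then have "(j, snd p) \<in> points W (map fst (R ! i))"
    using assms by (simp add: points_def blocks_obj_nth)
  moreover have "p = block_point R i (j, snd p)"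
    using ij(3) by (simp add: block_point_def prod_eq_iff)
  ultimately show ?thesis
    using that ij(1) by blast
qed

lemma block_point_inject:
  assumes "p \<in> points W (map fst (R ! i))" "p' \<in> points W (map fst (R ! i'))"
  shows "block_point R i p = block_point R i' p' \<longleftrightarrow> i = i' \<and> p = p'"
  using assms block_index_inject[of "fst p" "\<lambda>i. length (R ! i)" i "fst p'" i']
  by (auto simp: block_point_def points_def prod_eq_iff)

lemma pmap_blocks_map:
  assumes "i < length R" "p \<in> points W (map fst (R ! i))"
  shows "pmap (blocks_map R) (block_point R i p) = (i, snd (pmap (str (R ! i)) p))"
  using assms unfolding blocks_map_def block_point_def
  by (subst pmap_concat_block_index) (auto simp: points_def pmap_def str_nth)

definition blocks_pullback_map ::
  "('o \<times> 'm) list list \<Rightarrow> (nat \<times> 'm) list \<Rightarrow> (nat \<Rightarrow> (nat \<times> 'm) list) \<Rightarrow> (nat \<times> 'm) list" where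
  "blocks_pullback_map R q r = concat
      (map (\<lambda>k. map (block_point R (fst (q ! k))) (r k)) [0..<length q])"

lemma pmap_blocks_pullback_map:
  assumes "k < length q" "length R' = length q" "\<forall>k<length q. length (r k) = length (R' ! k)"
    and "p \<in> points W (map fst (R' ! k))"
  shows "pmap (blocks_pullback_map R q r) (block_point R' k p) = block_point R (fst (q ! k))
      (pmap (r k) p)"
proof -
  have "pmap (blocks_pullback_map R q r) (block_point R' k p)
      = pmap (map (block_point R (fst (q ! k))) (r k)) (fst p, snd p)"
    unfolding blocks_pullback_map_def block_point_def[of R']
    using assms by (subst pmap_concat_block_index) (auto simp: points_def)
  also have "\<dots> = block_point R (fst (q ! k)) (pmap (r k) p)"
    using assms by (simp add: pmap_def block_point_def points_def)
  finally show ?thesis .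
qed

text \<open>In the following context \<open>R' ! k\<close> is a restriction of \<open>R ! fst (q ! k)\<close> along the
  \<open>k\<close>-th orbit map of \<open>q : B \<rightarrow> S0\<close>, with projection \<open>r k\<close>; gluing these orbitwise pullbacks
  gives the pullback of \<open>blocks_map R\<close> along \<open>q\<close>.\<close>

context
  fixes S0 B :: "'o list" and q :: "(nat \<times> 'm) list" and R R' :: "('o \<times> 'm) list list"
    and r :: "nat \<Rightarrow> (nat \<times> 'm) list"
  assumes S0: "fobj S0" and R: "length R = length S0" "\<forall>i<length R. sobj (S0 ! i) (R ! i)"
    and B: "fobj B" and q: "q \<in> fmor B S0"
    and R': "length R' = length B" "\<forall>k<length R'. sobj (B ! k) (R' ! k)"
    and pb: "\<And>k. k < length B \<Longrightarrow> pointwise_pullback (map fst (R ! fst (q ! k))) [B ! k]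
      (str (R ! fst (q ! k))) [(0, snd (q ! k))] (map fst (R' ! k)) (r k) (str (R' ! k))"
begin

lemma blocks_index_hom:
  "k < length B \<Longrightarrow> fst (q ! k) < length R \<and> snd (q ! k) \<in> Hom (B ! k) (S0 ! fst (q ! k))"
  using fmor_nth[OF q] R(1) by (simp add: points_def)

lemma blocks_restriction_fmor:
  "k < length B \<Longrightarrow> r k \<in> fmor (map fst (R' ! k)) (map fst (R ! fst (q ! k)))"
  using pointwise_pullbackD(2)[OF pb] .

lemma blocks_restriction_length: "k < length B \<Longrightarrow> length (r k) = length (R' ! k)"
  using fmor_length[OF blocks_restriction_fmor] by simp

lemma blocks_restriction_square:
  assumes k: "k < length B" and W: "W \<in> Ob" and p: "p \<in> points W (map fst (R' ! k))"
  shows "snd (pmap (str (R ! fst (q ! k))) (pmap (r k) p)) = cmp (snd (q ! k))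
      (snd (pmap (str (R' ! k)) p))"
proof -
  let ?i = "fst (q ! k)"
  have i: "?i < length R" "snd (q ! k) \<in> Hom (B ! k) (S0 ! ?i)"
    using blocks_index_hom[OF k] by auto
  have sRi: "sobj (S0 ! ?i) (R ! ?i)"
    using R i(1) by simp
  have "pmap (str (R ! ?i)) (pmap (r k) p) = pmap [(0, snd (q ! k))] (pmap (str (R' ! k)) p)"
    using pointwise_pullback_commutes[OF pb[OF k] fobj_map_fst[OF sRi] fobj_singleton
      fobj_singleton W
        str_fmor[OF sRi] hom_fmor_singleton[OF i(2)] p] fobj_nth[OF B k] fobj_nth[OF S0] R i(1)
    by simp
  moreover have "fst p < length (R' ! k)"
    using p by (simp add: points_def)
  ultimately show ?thesis
    by (simp add: pmap_str pmap_singleton)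
qed

lemma pmap_blocks_pullback_map_block:
  assumes "k < length B" "p \<in> points W (map fst (R' ! k))"
  shows "pmap (blocks_pullback_map R q r) (block_point R' k p) = block_point R (fst (q ! k))
      (pmap (r k) p)"
proof (rule pmap_blocks_pullback_map[OF _ _ _ assms(2)])
  show "k < length q" "length R' = length q"
    using assms(1) R'(1) fmor_length[OF q] by simp_all
  show "\<forall>k<length q. length (r k) = length (R' ! k)"
    using blocks_restriction_length fmor_length[OF q] by simp
qed

lemma blocks_pullback_pointE:
  assumes z: "z \<in> points W (blocks_obj R')" and zk: "pmap (blocks_map R') z = (k, e)"
  obtains z' where "k < length B" "z' \<in> points W (map fst (R' ! k))" "z = block_point R' k z'"
    "pmap (str (R' ! k)) z' = (0, e)"
proof -
  obtain k' z' where k': "k' < length R'" and z': "z' \<in> points W (map fst (R' ! k'))"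
    and z_eq: "z = block_point R' k' z'"
    using points_blocks_objE[OF z] .
  have "pmap (blocks_map R') z = (k', snd (pmap (str (R' ! k')) z'))"
    using pmap_blocks_map[OF k' z'] z_eq by simp
  then have "k' = k" and "snd (pmap (str (R' ! k)) z') = e"
    using zk by auto
  moreover from this have "pmap (str (R' ! k)) z' = (0, e)"
    using z' by (simp add: pmap_str points_def)
  ultimately show ?thesis
    using that k' z' z_eq R'(1) by simp
qed

lemma blocks_pullback_map_fmor: "blocks_pullback_map R q r \<in> fmor (blocks_obj R') (blocks_obj R)"
proof -
  have "map (block_point R (fst (q ! k))) (r k) \<in> fmor (map fst (R' ! k)) (blocks_obj R)"
    if k: "k < length B" for k
    using block_point_points[OF conjunct1[OF blocks_index_hom[OF k]]
        fmor_nth[OF blocks_restriction_fmor[OF k]]] fmor_length[OF blocks_restriction_fmor[OF k]]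
    by (simp add: fmor_iff_points)
  then show ?thesis
    unfolding blocks_pullback_map_def blocks_obj_def[of R'] fmor_length[OF q] R'(1)
    by (rule fmor_concat)
qed

lemma blocks_pullback_commutes:
  "fcomp (blocks_map R) (blocks_pullback_map R q r) = fcomp q (blocks_map R')"
proof (rule fmor_eqI)
  show objs: "fobj (blocks_obj R')" "fobj S0"
    using fobj_blocks_obj R' S0 by auto
  show "fcomp (blocks_map R) (blocks_pullback_map R q r) \<in> fmor (blocks_obj R') S0"
    using fcomp_fmor[OF objs(1) fobj_blocks_obj[OF R(2)] S0 blocks_pullback_map_fmor
      blocks_map_fmor[OF R]] .
  show "fcomp q (blocks_map R') \<in> fmor (blocks_obj R') S0"
    using fcomp_fmor[OF objs(1) B S0 blocks_map_fmor[OF R'] q] .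
  fix W p assume W: "W \<in> Ob" and "p \<in> points W (blocks_obj R')"
  then obtain k p' where k: "k < length B" and p': "p' \<in> points W (map fst (R' ! k))"
    and p: "p = block_point R' k p'"
    using R'(1) by (metis points_blocks_objE)
  let ?i = "fst (q ! k)"
  have i: "?i < length R"
    using blocks_index_hom[OF k] by simp
  have "sobj (S0 ! ?i) (R ! ?i)" "sobj (B ! k) (R' ! k)"
    using R R' i k by simp_all
  then have rp: "pmap (r k) p' \<in> points W (map fst (R ! ?i))"
    using pmap_points[OF _ _ W blocks_restriction_fmor[OF k] p'] fobj_map_fst by blast
  have pp: "p \<in> points W (blocks_obj R')"
    using block_point_points[OF _ p'] k R'(1) p by simp
  have "pmap (fcomp (blocks_map R) (blocks_pullback_map R q r)) p
      = pmap (blocks_map R) (pmap (blocks_pullback_map R q r) p)"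
    using pmap_pmap[OF objs(1) fobj_blocks_obj[OF R(2)] S0 W blocks_pullback_map_fmor
        blocks_map_fmor[OF R] pp] by simp
  also have "\<dots> = pmap (blocks_map R) (block_point R ?i (pmap (r k) p'))"
    using pmap_blocks_pullback_map_block[OF k p'] p by simp
  also have "\<dots> = (?i, cmp (snd (q ! k)) (snd (pmap (str (R' ! k)) p')))"
    using pmap_blocks_map[OF i rp] blocks_restriction_square[OF k W p'] by simp
  also have "\<dots> = pmap q (pmap (blocks_map R') p)"
    using pmap_blocks_map[OF _ p'] k R'(1) p by (simp add: pmap_def)
  also have "\<dots> = pmap (fcomp q (blocks_map R')) p"
    using pmap_pmap[OF objs(1) B S0 W blocks_map_fmor[OF R'] q pp] R'(1) by simp
  finally show "pmap (fcomp (blocks_map R) (blocks_pullback_map R q r)) p = pmap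
      (fcomp q (blocks_map R')) p" .
qed

lemma blocks_cospan_pointE:
  assumes x: "x \<in> points W (blocks_obj R)" and y: "y \<in> points W B"
    and xy: "pmap (blocks_map R) x = pmap q y"
  obtains k e x' where "k < length B" "y = (k, e)" "e \<in> Hom W (B ! k)"
    "x' \<in> points W (map fst (R ! fst (q ! k)))" "x = block_point R (fst (q ! k)) x'"
    "pmap (str (R ! fst (q ! k))) x' = pmap [(0, snd (q ! k))] (0, e)"
proof -
  obtain i x' where i: "i < length R" and x': "x' \<in> points W (map fst (R ! i))"
    and x_eq: "x = block_point R i x'"
    using points_blocks_objE[OF x] .
  obtain k e where y_eq: "y = (k, e)" and k: "k < length B" and e: "e \<in> Hom W (B ! k)"
    using y by (cases y) (simp add: points_def)
  have "(i, snd (pmap (str (R ! i)) x')) = (fst (q ! k), cmp (snd (q ! k)) e)"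
    using xy pmap_blocks_map[OF i x'] x_eq y_eq by (simp add: pmap_def)
  then have "i = fst (q ! k)" and "snd (pmap (str (R ! i)) x') = cmp (snd (q ! k)) e"
    by auto
  moreover from this have "pmap (str (R ! fst (q ! k))) x' = pmap [(0, snd (q ! k))] (0, e)"
    using x' by (simp add: pmap_str pmap_singleton points_def)
  ultimately show ?thesis
    using that k y_eq e x' x_eq by blast
qed

lemma blocks_pullback_ex1_point:
  assumes W: "W \<in> Ob" and x: "x \<in> points W (blocks_obj R)" and y: "y \<in> points W B"
    and xy: "pmap (blocks_map R) x = pmap q y"
  shows "\<exists>!z. z \<in> points W (blocks_obj R') \<and> pmap (blocks_pullback_map R q r) z = x \<and>
    pmap (blocks_map R') z = y"
proof -
  obtain k e x' where k: "k < length B" and y_eq: "y = (k, e)" and e: "e \<in> Hom W (B ! k)"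
    and x': "x' \<in> points W (map fst (R ! fst (q ! k)))"
    and x_eq: "x = block_point R (fst (q ! k)) x'"
    and x'e: "pmap (str (R ! fst (q ! k))) x' = pmap [(0, snd (q ! k))] (0, e)"
    using blocks_cospan_pointE[OF x y xy] .
  have "\<exists>!z. z \<in> points W (map fst (R' ! k)) \<and> pmap (r k) z = x' \<and> pmap (str (R' ! k)) z = (0, e)"
    using pointwise_pullbackD(5)[OF pb[OF k] W x' _ x'e] e by (simp add: points_singleton_iff)
  then obtain z' where z': "z' \<in> points W (map fst (R' ! k))" "pmap (r k) z' = x'"
      "pmap (str (R' ! k)) z' = (0, e)"
    and z'_uniq: "\<And>z. z \<in> points W (map fst (R' ! k)) \<Longrightarrow> pmap (r k) z = x' \<Longrightarrow>
      pmap (str (R' ! k)) z = (0, e) \<Longrightarrow> z = z'"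
    by blast
  show ?thesis
  proof (rule ex1I[of _ "block_point R' k z'"])
    show "block_point R' k z' \<in> points W (blocks_obj R') \<and>
        pmap (blocks_pullback_map R q r) (block_point R' k z') = x \<and>
        pmap (blocks_map R') (block_point R' k z') = y"
      using block_point_points[OF _ z'(1)] pmap_blocks_pullback_map_block[OF k z'(1)]
        pmap_blocks_map[OF _ z'(1)] z' x_eq y_eq k R'(1) by simp
  next
    fix z assume z: "z \<in> points W (blocks_obj R') \<and> pmap (blocks_pullback_map R q r) z = x \<and>
        pmap (blocks_map R') z = y"
    then obtain z2 where z2: "z2 \<in> points W (map fst (R' ! k))" "z = block_point R' k z2"
      "pmap (str (R' ! k)) z2 = (0, e)"
      using blocks_pullback_pointE y_eq by metis
    have "sobj (S0 ! fst (q ! k)) (R ! fst (q ! k))" "sobj (B ! k) (R' ! k)"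
      using R R' k blocks_index_hom[OF k] by simp_all
    then have "pmap (r k) z2 \<in> points W (map fst (R ! fst (q ! k)))"
      using pmap_points[OF _ _ W blocks_restriction_fmor[OF k] z2(1)] fobj_map_fst by blast
    moreover have "block_point R (fst (q ! k)) (pmap (r k) z2) = block_point R (fst (q ! k)) x'"
      using z pmap_blocks_pullback_map_block[OF k z2(1)] z2(2) x_eq by simp
    ultimately have "pmap (r k) z2 = x'"
      using block_point_inject x' by blast
    then show "z = block_point R' k z'"
      using z'_uniq[OF z2(1) _ z2(3)] z2(2) by simp
  qed
qed

lemma pointwise_pullback_blocks:
  "pointwise_pullback (blocks_obj R) B (blocks_map R) q (blocks_obj R') (blocks_pullback_map R q r)
     (blocks_map R')"
  unfolding pointwise_pullback_def
  using fobj_blocks_obj[of R' B] blocks_map_fmor[of R' B] R' blocks_pullback_map_fmor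
    blocks_pullback_commutes blocks_pullback_ex1_point by simp

end

subsection \<open>Indexed coproducts\<close>

lemma length_Ind [simp]: "length (Ind a T) = length T"
  by (simp add: Ind_def)

lemma Ind_conv_map: "Ind a T = map (\<lambda>p. (fst p, cmp a (snd p))) T"
  by (simp add: Ind_def case_prod_beta)

lemma Ind_concat: "Ind f (concat xs) = concat (map (Ind f) xs)"
  by (induction xs) (auto simp: Ind_conv_map)

lemma Ind_Ind:
  assumes "W \<in> Ob" "U \<in> Ob" "V \<in> Ob" "sobj W T" "t \<in> Hom W U" "f \<in> Hom U V"
  shows "Ind f (Ind t T) = Ind (cmp f t) T"
  using assms cmp_assoc[of "fst (T ! i)" W U V "snd (T ! i)" t f for i]
  by (intro nth_equalityI) (auto simp: Ind_conv_map sobj_iff_nth)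

lemma coprod_over_conv_nth:
  "length Ts = length S \<Longrightarrow> coprod_over S Ts = concat
      (map (\<lambda>i. Ind (snd (S ! i)) (Ts ! i)) [0..<length S])"
  unfolding coprod_over_def by (intro arg_cong[where f = concat] nth_equalityI)
    (auto simp: case_prod_beta)

lemma str_concat: "str (concat xs) = concat (map str xs)"
  by (induction xs) (auto simp: str_def)

lemma map_fst_coprod_over: "length Ts = length S \<Longrightarrow> map fst (coprod_over S Ts) = blocks_obj Ts"
  unfolding blocks_obj_def by (simp add: coprod_over_conv_nth map_concat Ind_conv_map comp_def)

lemma str_coprod_over:
  assumes "length Ts = length S"
  shows "str (coprod_over S Ts) = fcomp (str S) (blocks_map Ts)"
proof -
  have "str (Ind (snd (S ! i)) (Ts ! i)) = fcomp (str S) (map (\<lambda>p. (i, snd p)) (Ts ! i))"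
    if "i < length S" for i
    using that by (auto simp: fcomp_eq_map_pmap str_def Ind_conv_map pmap_def case_prod_beta)
  then show ?thesis
    unfolding blocks_map_def coprod_over_conv_nth[OF assms] str_concat fcomp_concat assms map_map
    by (auto intro!: arg_cong[where f = concat])
qed

lemma length_coprod_over:
  "length Ts = length S \<Longrightarrow> length (coprod_over S Ts) = (\<Sum>j<length Ts. length (Ts ! j))"
  by (metis length_map map_fst_coprod_over length_blocks_obj)

lemma coprod_over_nth:
  assumes "length T = length S" "i < length S" "l < length (T ! i)"
  shows "coprod_over S T ! block_index (\<lambda>i. length (T ! i)) i l =
      (fst (T ! i ! l), cmp (snd (S ! i)) (snd (T ! i ! l)))"
  unfolding coprod_over_conv_nth[OF assms(1)] using assms
  by (subst nth_concat_block_index[where L = "\<lambda>i. length (T ! i)"]) (auto simp: Ind_conv_map)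

lemma sobj_coprod_over:
  assumes "V \<in> Ob" "sobj V S" "length Ts = length S" "\<forall>i<length S. sobj (fst (S ! i)) (Ts ! i)"
  shows "sobj V (coprod_over S Ts)"
  unfolding sobj_def
proof
  fix x assume "x \<in> set (coprod_over S Ts)"
  then obtain i l where i: "i < length S" and l: "l < length (Ts ! i)"
    and x: "x = (fst (Ts ! i ! l), cmp (snd (S ! i)) (snd (Ts ! i ! l)))"
    using assms(3) by (auto simp: coprod_over_conv_nth in_set_conv_nth Ind_conv_map)
  have "fst (S ! i) \<in> Ob" "snd (S ! i) \<in> Hom (fst (S ! i)) V"
    using assms(2) i by (auto simp: sobj_iff_nth)
  moreover have "fst (Ts ! i ! l) \<in> Ob" "snd (Ts ! i ! l) \<in> Hom (fst (Ts ! i ! l)) (fst (S ! i))"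
    using assms(4) i l by (auto simp: sobj_iff_nth)
  ultimately show "case x of (U, f) \<Rightarrow> U \<in> Ob \<and> f \<in> Hom U V"
    using x assms(1) by (auto intro: cmp_hom)
qed

lemma coprod_over_Ind:
  assumes "U \<in> Ob" "V \<in> Ob" "sobj U T" "f \<in> Hom U V"
    and "length R = length T" "\<forall>l<length T. sobj (fst (T ! l)) (R ! l)"
  shows "coprod_over (Ind f T) R = Ind f (coprod_over T R)"
proof -
  have eq: "Ind (snd (Ind f T ! l)) (R ! l) = Ind f (Ind (snd (T ! l)) (R ! l))"
    if "l < length T" for l
    using Ind_Ind[of "fst (T ! l)" U V "R ! l" "snd (T ! l)" f] assms that
    by (simp add: Ind_conv_map sobj_iff_nth)
  have len: "length R = length (Ind f T)"
    using assms(5) by simp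
  show ?thesis
    unfolding coprod_over_conv_nth[OF len] coprod_over_conv_nth[OF assms(5)] Ind_concat map_map
      length_Ind
    by (intro arg_cong[where f = concat] map_cong) (simp_all add: eq)
qed

text \<open>\<open>regroup T R\<close> cuts a list indexed by the orbits of \<open>\<Coprod>^S_U T_U\<close> into the pieces indexed
  by the orbits of the individual \<open>T_U\<close>.\<close>

definition regroup :: "('o \<times> 'm) list list \<Rightarrow> 'a list \<Rightarrow> 'a list list" where
  "regroup T R = map (\<lambda>i. map (\<lambda>l. R ! block_index (\<lambda>i. length (T ! i)) i l) [0..<length (T ! i)])
     [0..<length T]"

lemma length_regroup_nth: "i < length T \<Longrightarrow> length (regroup T R ! i) = length (T ! i)"
  by (simp add: regroup_def)

lemma regroup_nth_over:
  assumes "length T = length S" "length R = length (coprod_over S T)"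
    and "\<forall>e<length R. P (R ! e) (fst (coprod_over S T ! e))" and "i < length S" "l < length (T ! i)"
  shows "P (regroup T R ! i ! l) (fst (T ! i ! l))"
proof -
  let ?e = "block_index (\<lambda>i. length (T ! i)) i l"
  have "?e < length R"
    using block_index_less[of i "length S" l "\<lambda>i. length (T ! i)"] assms length_coprod_over by simp
  moreover have "fst (coprod_over S T ! ?e) = fst (T ! i ! l)"
    using coprod_over_nth[OF assms(1,4,5)] by simp
  ultimately have "P (R ! ?e) (fst (T ! i ! l))"
    using assms(3) by metis
  then show ?thesis
    using assms(1,4,5) by (simp add: regroup_def)
qed

lemma coprod_over_assoc:
  assumes V: "V \<in> Ob" and S: "sobj V S"
    and T: "length T = length S" "\<forall>i<length S. sobj (fst (S ! i)) (T ! i)"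
    and R: "length R = length (coprod_over S T)"
      "\<forall>e<length R. sobj (fst (coprod_over S T ! e)) (R ! e)"
  shows "coprod_over (coprod_over S T) R
    = coprod_over S (map (\<lambda>i. coprod_over (T ! i) (regroup T R ! i)) [0..<length S])"
proof -
  define L where "L = (\<lambda>i. length (T ! i))"
  define X where "X = coprod_over S T"
  define G where "G = (\<lambda>e. Ind (snd (X ! e)) (R ! e))"
  have block: "concat (map (\<lambda>l. G (block_index L i l)) [0..<L i])
      = Ind (snd (S ! i)) (coprod_over (T ! i) (regroup T R ! i))" if i: "i < length S" for i
  proof -
    have eq: "G (block_index L i l) = Ind (snd (Ind (snd (S ! i)) (T ! i) ! l))
        (regroup T R ! i ! l)"
      if "l < L i" for l
      using coprod_over_nth[OF T(1) i] that i T(1)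
      by (simp add: G_def X_def L_def regroup_def Ind_conv_map)
    have len: "length (regroup T R ! i) = length (Ind (snd (S ! i)) (T ! i))"
      using length_regroup_nth[of i T R] i T(1) by simp
    have "concat (map (\<lambda>l. G (block_index L i l)) [0..<L i])
        = coprod_over (Ind (snd (S ! i)) (T ! i)) (regroup T R ! i)"
      unfolding coprod_over_conv_nth[OF len] length_Ind L_def
      by (intro arg_cong[where f = concat] map_cong) (simp_all add: eq[unfolded L_def])
    also have "\<dots> = Ind (snd (S ! i)) (coprod_over (T ! i) (regroup T R ! i))"
      using coprod_over_Ind[of "fst (S ! i)" V "T ! i" "snd (S ! i)" "regroup T R ! i"]
        regroup_nth_over[where P = "\<lambda>x U. sobj U x", OF T(1) R(1)] R(2) length_regroup_nth[of i T R]
        S T i V by (simp add: sobj_iff_nth)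
    finally show ?thesis .
  qed
  have "coprod_over X R = concat (map G [0..<(\<Sum>j<length S. L j)])"
    unfolding G_def using coprod_over_conv_nth[of R X] R(1) length_coprod_over[OF T(1)] T(1)
    by (simp add: X_def L_def)
  also have "\<dots> = concat
      (map (\<lambda>i. concat (map (\<lambda>l. G (block_index L i l)) [0..<L i])) [0..<length S])"
    unfolding upt_block_index concat_map_concat by (simp add: comp_def)
  also have "\<dots> = coprod_over S (map (\<lambda>i. coprod_over (T ! i) (regroup T R ! i)) [0..<length S])"
  proof -
    have len: "length (map (\<lambda>i. coprod_over (T ! i) (regroup T R ! i)) [0..<length S]) = length S"
      by simp
    show ?thesis
      unfolding coprod_over_conv_nth[OF len]
      by (intro arg_cong[where f = concat] map_cong) (simp_all add: block)
  qed
  finally show ?thesis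
    unfolding X_def .
qed

definition collection :: "('o \<Rightarrow> ('o \<times> 'm) list set) \<Rightarrow> bool" where
  "collection K \<longleftrightarrow> (\<forall>V. V \<notin> Ob \<longrightarrow> K V = {}) \<and> (\<forall>V\<in>Ob. \<forall>S\<in>K V. sobj V S)"

definition iso_closed :: "('o \<Rightarrow> ('o \<times> 'm) list set) \<Rightarrow> bool" where
  "iso_closed K \<longleftrightarrow> (\<forall>V\<in>Ob. \<forall>S S'. S \<in> K V \<and> sobj V S' \<and> siso S S' \<longrightarrow> S' \<in> K V)"

definition restriction_closed :: "('o \<Rightarrow> ('o \<times> 'm) list set) \<Rightarrow> bool" where
  "restriction_closed K \<longleftrightarrow> (\<forall>V\<in>Ob. \<forall>U\<in>Ob. \<forall>a\<in>Hom U V. \<forall>S\<in>K V. \<forall>P p1 p2.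
     is_pullback (map fst S) [U] (str S) [(0, a)] P p1 p2 \<longrightarrow> zip P (map snd p2) \<in> K U)"

definition contains_terminals :: "('o \<Rightarrow> ('o \<times> 'm) list set) \<Rightarrow> bool" where
  "contains_terminals K \<longleftrightarrow> (\<forall>V\<in>Ob. K V \<noteq> {} \<longrightarrow> terminal V \<in> K V)"

definition coprod_closed_over ::
  "('o \<Rightarrow> ('o \<times> 'm) list set) \<Rightarrow> ('o \<Rightarrow> ('o \<times> 'm) list set) \<Rightarrow> bool" where
  "coprod_closed_over K J \<longleftrightarrow> (\<forall>V\<in>Ob. \<forall>S\<in>K V. \<forall>Ts. length Ts = length S \<and>
     (\<forall>i<length S. Ts ! i \<in> J (fst (S ! i))) \<longrightarrow> coprod_over S Ts \<in> J V)"

lemma is_wIndSys_iff: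
  "is_wIndSys K \<longleftrightarrow> collection K \<and> iso_closed K \<and> restriction_closed K \<and> contains_terminals K \<and>
     coprod_closed_over K K"
  unfolding is_wIndSys_def collection_def iso_closed_def restriction_closed_def
    contains_terminals_def coprod_closed_over_def by blast

lemma collectionD: "collection K \<Longrightarrow> S \<in> K V \<Longrightarrow> V \<in> Ob \<and> sobj V S"
  unfolding collection_def by blast

lemma collection_sobj_nth:
  "collection K \<Longrightarrow> sobj V S \<Longrightarrow> \<forall>i<length S. Ts ! i \<in> K (fst (S ! i)) \<Longrightarrow>
   \<forall>i<length S. sobj (fst (S ! i)) (Ts ! i)"
  using collectionD by blast

lemma collection_UN: "(\<And>n. collection (K n)) \<Longrightarrow> collection (\<lambda>V. \<Union>n. K n V)"
  unfolding collection_def by blast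

lemma iso_closed_UN:
  assumes "\<And>n. iso_closed (K n)"
  shows "iso_closed (\<lambda>V. \<Union>n. K n V)"
  unfolding iso_closed_def
proof (intro ballI allI impI)
  fix V S S' assume "V \<in> Ob" and S: "S \<in> (\<Union>n. K n V) \<and> sobj V S' \<and> siso S S'"
  then obtain n where "S \<in> K n V"
    by blast
  then show "S' \<in> (\<Union>n. K n V)"
    using assms[of n] \<open>V \<in> Ob\<close> S unfolding iso_closed_def by blast
qed

lemma restriction_closed_UN:
  assumes "\<And>n. restriction_closed (K n)"
  shows "restriction_closed (\<lambda>V. \<Union>n. K n V)"
  unfolding restriction_closed_def
proof (intro ballI allI impI)
  fix V U a S P p1 p2 assume "V \<in> Ob" "U \<in> Ob" "a \<in> Hom U V" "S \<in> (\<Union>n. K n V)"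
    "is_pullback (map fst S) [U] (str S) [(0, a)] P p1 p2"
  moreover obtain n where "S \<in> K n V"
    using \<open>S \<in> (\<Union>n. K n V)\<close> by blast
  ultimately have "zip P (map snd p2) \<in> K n U"
    using assms[of n] unfolding restriction_closed_def by blast
  then show "zip P (map snd p2) \<in> (\<Union>n. K n U)"
    by blast
qed

lemma coprod_closed_over_UN:
  assumes "\<And>n. coprod_closed_over (K n) J"
  shows "coprod_closed_over (\<lambda>V. \<Union>n. K n V) J"
  unfolding coprod_closed_over_def
proof (intro ballI allI impI)
  fix V S Ts assume "V \<in> Ob" "S \<in> (\<Union>n. K n V)"
    and "length Ts = length S \<and> (\<forall>i<length S. Ts ! i \<in> J (fst (S ! i)))"
  moreover obtain n where "S \<in> K n V"
    using \<open>S \<in> (\<Union>n. K n V)\<close> by blast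
  ultimately show "coprod_over S Ts \<in> J V"
    using assms[of n] unfolding coprod_closed_over_def by blast
qed

lemma collection_Un: "collection K \<Longrightarrow> collection K' \<Longrightarrow> collection (\<lambda>V. K V \<union> K' V)"
  unfolding collection_def by blast

lemma iso_closed_Un:
  assumes "iso_closed K" "iso_closed K'"
  shows "iso_closed (\<lambda>V. K V \<union> K' V)"
  unfolding iso_closed_def
proof (intro ballI allI impI)
  fix V S S' assume "V \<in> Ob" "S \<in> K V \<union> K' V \<and> sobj V S' \<and> siso S S'"
  then show "S' \<in> K V \<union> K' V"
    using assms unfolding iso_closed_def by (elim conjE UnE) blast+
qed

lemma restriction_closed_Un:
  assumes "restriction_closed K" "restriction_closed K'"
  shows "restriction_closed (\<lambda>V. K V \<union> K' V)"
  unfolding restriction_closed_def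
proof (intro ballI allI impI)
  fix V U a S P p1 p2 assume "V \<in> Ob" "U \<in> Ob" "a \<in> Hom U V" "S \<in> K V \<union> K' V"
    "is_pullback (map fst S) [U] (str S) [(0, a)] P p1 p2"
  then show "zip P (map snd p2) \<in> K U \<union> K' U"
    using assms unfolding restriction_closed_def by (elim UnE) blast+
qed

lemma coprod_closed_over_Un:
  assumes "coprod_closed_over K J" "coprod_closed_over K' J"
  shows "coprod_closed_over (\<lambda>V. K V \<union> K' V) J"
  unfolding coprod_closed_over_def
proof (intro ballI allI impI)
  fix V S Ts assume "V \<in> Ob" "S \<in> K V \<union> K' V"
    "length Ts = length S \<and> (\<forall>i<length S. Ts ! i \<in> J (fst (S ! i)))"
  then show "coprod_over S Ts \<in> J V"
    using assms unfolding coprod_closed_over_def by (elim UnE) blast+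
qed

lemma restriction_blocks_exist:
  assumes K: "collection K" "restriction_closed K"
    and S0: "fobj S0" and R: "length R = length S0" "\<forall>i<length R. R ! i \<in> K (S0 ! i)"
    and B: "fobj B" and q: "q \<in> fmor B S0"
  obtains R' y where "length R' = length B" "\<forall>k<length R'. R' ! k \<in> K (B ! k)"
    "pointwise_pullback (blocks_obj R) B (blocks_map R) q (blocks_obj R') y (blocks_map R')"
proof -
  have sR: "\<forall>i<length R. sobj (S0 ! i) (R ! i)"
    using R(2) K(1) collectionD by blast
  have qk: "fst (q ! k) < length R" "snd (q ! k) \<in> Hom (B ! k) (S0 ! fst (q ! k))"
    if "k < length B" for k
    using fmor_nth[OF q that] R(1) by (auto simp: points_def)
  have "\<forall>k. \<exists>t. k < length B \<longrightarrow> is_pullback (map fst (R ! fst (q ! k))) [B ! k]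
      (str (R ! fst (q ! k))) [(0, snd (q ! k))] (fst t) (fst (snd t)) (snd (snd t))"
    using restriction_pullback_exists[OF fobj_nth[OF S0] fobj_nth[OF B] qk(2)] sR qk(1) R(1)
    by force
  then obtain t where pb: "\<And>k. k < length B \<Longrightarrow> is_pullback (map fst (R ! fst (q ! k))) [B ! k]
      (str (R ! fst (q ! k))) [(0, snd (q ! k))] (fst (t k)) (fst (snd (t k))) (snd (snd (t k)))"
    by metis
  define R' where "R' = map (\<lambda>k. zip (fst (t k)) (map snd (snd (snd (t k))))) [0..<length B]"
  have "zip (fst (t k)) (map snd (snd (snd (t k)))) \<in> K (B ! k)" if k: "k < length B" for k
  proof -
    have "S0 ! fst (q ! k) \<in> Ob" "R ! fst (q ! k) \<in> K (S0 ! fst (q ! k))"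
      using fobj_nth[OF S0] qk(1)[OF k] R by auto
    then show ?thesis
      using K(2)[unfolded restriction_closed_def, rule_format, OF _ fobj_nth[OF B k] qk(2)[OF k] _
        pb[OF k]]
      by blast
  qed
  then have R'K: "\<forall>k<length R'. R' ! k \<in> K (B ! k)"
    by (simp add: R'_def)
  have pbk: "pointwise_pullback (map fst (R ! fst (q ! k))) [B ! k] (str (R ! fst (q ! k)))
      [(0, snd (q ! k))] (map fst (R' ! k)) (fst (snd (t k))) (str (R' ! k))"
    if "k < length B" for k
    using is_pullback_pointwise[OF pb[OF that]]
      str_zip[OF pointwise_pullbackD(3)[OF is_pullback_pointwise[OF pb[OF that]]]]
      that by (simp add: R'_def)
  have sR': "\<forall>k<length R'. sobj (B ! k) (R' ! k)"
    using R'K K(1) collectionD by blast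
  have len: "length R' = length B"
    by (simp add: R'_def)
  have "pointwise_pullback (blocks_obj R) B (blocks_map R) q (blocks_obj R')
      (blocks_pullback_map R q (\<lambda>k. fst (snd (t k)))) (blocks_map R')"
    using pointwise_pullback_blocks[OF S0 R(1) sR B q len sR' pbk] .
  with that[OF len R'K] show ?thesis .
qed

lemma restriction_coprod_over:
  assumes K: "collection K" "restriction_closed K"
    and V: "V \<in> Ob" and U: "U \<in> Ob" and a: "a \<in> Hom U V" and S: "sobj V S" "is_restriction U a S S'"
    and Ts: "length Ts = length S" "\<forall>i<length S. Ts ! i \<in> K (fst (S ! i))"
  obtains Ts' where "length Ts' = length S'" "\<forall>k<length S'. Ts' ! k \<in> K (fst (S' ! k))"
    "is_restriction U a (coprod_over S Ts) (coprod_over S' Ts')"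
proof -
  obtain q where pbS: "pointwise_pullback (map fst S) [U] (str S) [(0, a)] (map fst S') q (str S')"
    using S(2) unfolding is_restriction_def by blast
  note P = pointwise_pullbackD[OF pbS]
  have obs: "fobj (map fst S)" "fobj [U]" "fobj [V]"
    using S(1) U V fobj_map_fst fobj_singleton by auto
  obtain Ts' y where Ts': "length Ts' = length S'" "\<forall>k<length Ts'. Ts' ! k \<in> K (fst (S' ! k))"
    and pbT: "pointwise_pullback (blocks_obj Ts) (map fst S') (blocks_map Ts) q (blocks_obj Ts') y
      (blocks_map Ts')"
    using restriction_blocks_exist[OF K obs(1), of Ts "map fst S'" q] Ts P(1,2) by auto
  have sTs: "\<forall>i<length Ts. sobj (map fst S ! i) (Ts ! i)"
    using collection_sobj_nth[OF K(1) S(1) Ts(2)] Ts(1) by simp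
  have "pointwise_pullback (blocks_obj Ts) [U] (fcomp (str S) (blocks_map Ts)) [(0, a)]
      (blocks_obj Ts') y (fcomp (str S') (blocks_map Ts'))"
    using pointwise_pullback_paste[OF pbS pbT obs(1) fobj_blocks_obj[OF sTs] obs(2,3)
      str_fmor[OF S(1)]
        hom_fmor_singleton[OF a] blocks_map_fmor] Ts(1) sTs by simp
  then have "is_restriction U a (coprod_over S Ts) (coprod_over S' Ts')"
    unfolding is_restriction_def
    using map_fst_coprod_over str_coprod_over Ts(1) Ts'(1) by metis
  with Ts' show ?thesis
    using that by simp
qed

text \<open>The new summands are the restrictions of the old ones along the orbit maps of the
  isomorphism \<open>Y \<cong> S\<close>.\<close>

lemma coprod_over_siso_transport:
  assumes K: "collection K" "restriction_closed K"
    and V: "V \<in> Ob" and S: "sobj V S" and Y: "sobj V Y" "siso Y S"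
    and R: "length R = length S" "\<forall>i<length S. R ! i \<in> K (fst (S ! i))"
  obtains R' where "length R' = length Y" "\<forall>e<length Y. R' ! e \<in> K (fst (Y ! e))"
    "siso (coprod_over Y R') (coprod_over S R)"
proof -
  obtain m where m: "m \<in> smor Y S"
    and bij: "\<And>W. W \<in> Ob \<Longrightarrow> bij_betw (pmap m) (points W (map fst Y)) (points W (map fst S))"
    using siso_bij_points[OF Y(1) S Y(2)] by blast
  have mf: "m \<in> fmor (map fst Y) (map fst S)" and ms: "fcomp (str S) m = str Y"
    using m by (simp_all add: smor_iff)
  have obs: "fobj (map fst S)" "fobj (map fst Y)" "fobj [V]"
    using S Y(1) V fobj_map_fst fobj_singleton by auto
  obtain R' y where R': "length R' = length Y" "\<forall>e<length R'. R' ! e \<in> K (fst (Y ! e))"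
    and pb: "pointwise_pullback (blocks_obj R) (map fst Y) (blocks_map R) m (blocks_obj R') y
        (blocks_map R')"
    using restriction_blocks_exist[OF K obs(1), of R "map fst Y" m] R obs(2) mf by auto
  note P = pointwise_pullbackD[OF pb]
  have sR: "\<forall>i<length R. sobj (map fst S ! i) (R ! i)"
    using collection_sobj_nth[OF K(1) S R(2)] R(1) by simp
  have sR': "\<forall>e<length R'. sobj (fst (Y ! e)) (R' ! e)"
    using collection_sobj_nth[OF K(1) Y(1), of R'] R' by simp
  have bm: "blocks_map R \<in> fmor (blocks_obj R) (map fst S)"
    using blocks_map_fmor sR R(1) by simp
  have "fcomp (str (coprod_over S R)) y = fcomp (str S) (fcomp (blocks_map R) y)"
    using str_coprod_over[OF R(1)] fcomp_assoc[OF P(1) fobj_blocks_obj[OF sR] obs(1,3) P(2) bm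
        str_fmor[OF S]] by simp
  also have "\<dots> = fcomp (fcomp (str S) m) (blocks_map R')"
    using P(4) fcomp_assoc[OF P(1) obs(2,1,3) P(3) mf str_fmor[OF S]] by simp
  also have "\<dots> = str (coprod_over Y R')"
    using ms str_coprod_over[OF R'(1)] by simp
  finally have "y \<in> smor (coprod_over Y R') (coprod_over S R)"
    using P(2) map_fst_coprod_over R(1) R'(1) by (simp add: smor_iff)
  moreover have "bij_betw (pmap y) (points W (map fst (coprod_over Y R')))
      (points W (map fst (coprod_over S R)))"
    if "W \<in> Ob" for W
    using pointwise_pullback_bij_base_change[OF pb fobj_blocks_obj[OF sR] obs(2,1) that bm mf
      bij[OF that]]
      map_fst_coprod_over R(1) R'(1) by simp
  moreover have "sobj V (coprod_over Y R')" "sobj V (coprod_over S R)"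
    using sobj_coprod_over[OF V Y(1) R'(1)] sobj_coprod_over[OF V S R(1)] sR sR' R(1) R'(1)
    by simp_all
  ultimately have "siso (coprod_over Y R') (coprod_over S R)"
    using siso_if_bij_points[OF V] by blast
  with R' show ?thesis
    using that by simp
qed

subsection \<open>The closure operators\<close>

lemma Cl_stepE:
  assumes "X \<in> Cl_step C E V"
  obtains S Ts where "V \<in> Ob" "sobj V X" "S \<in> C V" "length Ts = length S"
    "\<forall>i<length S. Ts ! i \<in> E (fst (S ! i))" "siso (coprod_over S Ts) X"
  using assms unfolding Cl_step_def by (auto split: if_splits)

lemma Cl_stepI:
  assumes "V \<in> Ob" "sobj V X" "S \<in> C V" "length Ts = length S"
    "\<forall>i<length S. Ts ! i \<in> E (fst (S ! i))" "siso (coprod_over S Ts) X"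
  shows "X \<in> Cl_step C E V"
  using assms unfolding Cl_step_def by auto

lemma Cl_step_mono:
  assumes "\<And>W. E W \<subseteq> E' W"
  shows "Cl_step C E V \<subseteq> Cl_step C E' V"
proof
  fix X assume "X \<in> Cl_step C E V"
  then obtain S Ts where "V \<in> Ob" "sobj V X" "S \<in> C V" "length Ts = length S"
    "\<forall>i<length S. Ts ! i \<in> E (fst (S ! i))" "siso (coprod_over S Ts) X"
    using Cl_stepE by metis
  then show "X \<in> Cl_step C E' V"
    using Cl_stepI[of V X S C Ts E'] assms by blast
qed

lemma coprod_over_in_Cl_step:
  assumes "collection K" "collection E" "S \<in> K V" "length Ts = length S"
    "\<forall>i<length S. Ts ! i \<in> E (fst (S ! i))"
  shows "coprod_over S Ts \<in> Cl_step K E V"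
proof -
  have V: "V \<in> Ob" and S: "sobj V S"
    using collectionD[OF assms(1,3)] by auto
  have "sobj V (coprod_over S Ts)"
    using sobj_coprod_over[OF V S assms(4) collection_sobj_nth[OF assms(2) S assms(5)]] .
  then show ?thesis
    using Cl_stepI[of V _ S K Ts E, OF V _ assms(3-5) siso_refl[OF V]] by blast
qed

lemma collection_Cl_step: "collection (Cl_step C E)"
  unfolding collection_def Cl_step_def by auto

lemma iso_closed_Cl_step:
  assumes "collection C" "collection E"
  shows "iso_closed (Cl_step C E)"
  unfolding iso_closed_def
proof (intro ballI allI impI)
  fix V X X' assume V: "V \<in> Ob" and X: "X \<in> Cl_step C E V \<and> sobj V X' \<and> siso X X'"
  then obtain S Ts where sX: "sobj V X" and S: "S \<in> C V" and Ts: "length Ts = length S"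
    "\<forall>i<length S. Ts ! i \<in> E (fst (S ! i))" and iso: "siso (coprod_over S Ts) X"
    using Cl_stepE by metis
  have sS: "sobj V S"
    using collectionD[OF assms(1) S] by simp
  have "sobj V (coprod_over S Ts)"
    using sobj_coprod_over[OF V sS Ts(1) collection_sobj_nth[OF assms(2) sS Ts(2)]] .
  then have "siso (coprod_over S Ts) X'"
    using siso_trans[OF V _ sX _ iso] X by blast
  then show "X' \<in> Cl_step C E V"
    using Cl_stepI[of V X' S C Ts E, OF V _ S Ts] X by blast
qed

lemma restriction_closed_Cl_step:
  assumes C: "collection C" "restriction_closed C" and E: "collection E" "restriction_closed E"
  shows "restriction_closed (Cl_step C E)"
  unfolding restriction_closed_def
proof (intro ballI allI impI)
  fix V U a X P p1 p2
  assume V: "V \<in> Ob" and U: "U \<in> Ob" and a: "a \<in> Hom U V" and X: "X \<in> Cl_step C E V"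
    and pb: "is_pullback (map fst X) [U] (str X) [(0, a)] P p1 p2"
  obtain S Ts where sX: "sobj V X" and S: "S \<in> C V" and Ts: "length Ts = length S"
    "\<forall>i<length S. Ts ! i \<in> E (fst (S ! i))" and iso: "siso (coprod_over S Ts) X"
    using Cl_stepE[OF X] by metis
  have sS: "sobj V S"
    using collectionD[OF C(1) S] by simp
  obtain P0 q1 q2 where pb0: "is_pullback (map fst S) [U] (str S) [(0, a)] P0 q1 q2"
    using restriction_pullback_exists[OF V U a sS] by blast
  define S' where "S' = zip P0 (map snd q2)"
  have S': "S' \<in> C U" "is_restriction U a S S'" "sobj U S'"
    using C(2) V U a S pb0 is_pullback_restriction[OF pb0] unfolding restriction_closed_def S'_def
      by auto
  obtain Ts' where Ts': "length Ts' = length S'" "\<forall>k<length S'. Ts' ! k \<in> E (fst (S' ! k))"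
    and res: "is_restriction U a (coprod_over S Ts) (coprod_over S' Ts')"
    using restriction_coprod_over[OF E V U a sS S'(2) Ts] by blast
  have sY: "sobj U (coprod_over S' Ts')"
    using sobj_coprod_over[OF U S'(3) Ts'(1) collection_sobj_nth[OF E(1) S'(3) Ts'(2)]] .
  have sX': "sobj V (coprod_over S Ts)"
    using sobj_coprod_over[OF V sS Ts(1) collection_sobj_nth[OF E(1) sS Ts(2)]] .
  have "is_restriction U a X (coprod_over S' Ts')"
    using restriction_siso[OF V U a sX' sX iso res] .
  then have "siso (coprod_over S' Ts') (zip P (map snd p2))"
    using restriction_unique[OF V U a sX sY] is_pullback_restriction[OF pb] by blast
  then show "zip P (map snd p2) \<in> Cl_step C E U"
    using Cl_stepI[of U _ S' C Ts' E, OF U _ S'(1) Ts'] is_pullback_restriction(2)[OF pb] by blast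
qed

text \<open>A coproduct indexed by \<open>X \<cong> \<Coprod>^S_U T_U\<close> is rebracketed, after transport along the
  isomorphism, as an \<open>S\<close>-indexed coproduct of \<open>T_U\<close>-indexed coproducts.\<close>

lemma coprod_closed_over_Cl_step:
  assumes J: "collection J" "iso_closed J" "restriction_closed J"
    and Cc: "collection Cc" "coprod_closed_over Cc J" and E: "collection E" "coprod_closed_over E J"
  shows "coprod_closed_over (Cl_step Cc E) J"
  unfolding coprod_closed_over_def
proof (intro ballI allI impI)
  fix V X R assume V: "V \<in> Ob" and X: "X \<in> Cl_step Cc E V"
    and R: "length R = length X \<and> (\<forall>i<length X. R ! i \<in> J (fst (X ! i)))"
  obtain S T where sX: "sobj V X" and S: "S \<in> Cc V" and T: "length T = length S"
    "\<forall>i<length S. T ! i \<in> E (fst (S ! i))" and iso: "siso (coprod_over S T) X"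
    using Cl_stepE[OF X] by metis
  have sS: "sobj V S"
    using collectionD[OF Cc(1) S] by simp
  have sT: "\<forall>i<length S. sobj (fst (S ! i)) (T ! i)"
    using collection_sobj_nth[OF E(1) sS T(2)] .
  define Y where "Y = coprod_over S T"
  have sY: "sobj V Y"
    unfolding Y_def using sobj_coprod_over[OF V sS T(1) sT] .
  obtain R' where R': "length R' = length Y" "\<forall>e<length Y. R' ! e \<in> J (fst (Y ! e))"
    and iso': "siso (coprod_over Y R') (coprod_over X R)"
    using coprod_over_siso_transport[OF J(1,3) V sX sY iso[folded Y_def]] R by blast
  have sR': "\<forall>e<length R'. sobj (fst (Y ! e)) (R' ! e)"
    using collection_sobj_nth[OF J(1) sY R'(2)] R'(1) by simp
  have "coprod_over (T ! i) (regroup T R' ! i) \<in> J (fst (S ! i))" if i: "i < length S" for i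
  proof -
    have "\<forall>l<length (T ! i). regroup T R' ! i ! l \<in> J (fst (T ! i ! l))"
      using regroup_nth_over[where P = "\<lambda>x U. x \<in> J U", OF T(1) R'(1)[unfolded Y_def]] R' i
      by (simp add: Y_def)
    moreover have "fst (S ! i) \<in> Ob" "T ! i \<in> E (fst (S ! i))"
      using sS T(2) i by (simp_all add: sobj_iff_nth)
    ultimately show ?thesis
      using E(2) length_regroup_nth[of i T R'] i T(1) unfolding coprod_closed_over_def by simp
  qed
  then have "coprod_over S (map (\<lambda>i. coprod_over (T ! i) (regroup T R' ! i)) [0..<length S]) \<in> J V"
    using Cc(2) V S unfolding coprod_closed_over_def by simp
  then have "coprod_over Y R' \<in> J V"
    unfolding Y_def using coprod_over_assoc[OF V sS T(1) sT] R'(1) sR' Y_def by simp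
  moreover have "sobj V (coprod_over X R)"
    using sobj_coprod_over[OF V sX] R collection_sobj_nth[OF J(1) sX] by blast
  ultimately show "coprod_over X R \<in> J V"
    using J(2) V iso' unfolding iso_closed_def by blast
qed

lemma Cl_hat_conv_UN: "Cl_hat C E = (\<lambda>V. \<Union>n. Cl_n C n E V)"
proof
  fix V
  have "E V \<subseteq> (\<Union>n. Cl_n C n E V)"
    using UN_upper[of 0 UNIV "\<lambda>n. Cl_n C n E V"] by simp
  then show "Cl_hat C E V = (\<Union>n. Cl_n C n E V)"
    unfolding Cl_hat_def Cl_def by (rule Un_absorb1)
qed

lemma Cl_step_subset_Cl_hat: "Cl_step C E V \<subseteq> Cl_hat C E V"
  using UN_upper[of "Suc 0" UNIV "\<lambda>n. Cl_n C n E V"] by (simp add: Cl_hat_conv_UN)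

lemma subset_Cl_hat: "E V \<subseteq> Cl_hat C E V"
  by (simp add: Cl_hat_def)

lemma Cl_hat_closed:
  assumes "collection C" "restriction_closed C" "collection E" "iso_closed E" "restriction_closed E"
  shows "collection (Cl_hat C E) \<and> iso_closed (Cl_hat C E) \<and> restriction_closed (Cl_hat C E)"
proof -
  have "collection (Cl_n C n E) \<and> iso_closed (Cl_n C n E) \<and> restriction_closed (Cl_n C n E)" for n
  proof (induction n)
    case (Suc n)
    then show ?case
      using collection_Cl_step iso_closed_Cl_step[OF assms(1)]
        restriction_closed_Cl_step[OF assms(1,2)]
      by simp
  qed (use assms in simp)
  then show ?thesis
    unfolding Cl_hat_conv_UN using collection_UN[of "\<lambda>n. Cl_n C n E"]
      iso_closed_UN[of "\<lambda>n. Cl_n C n E"] restriction_closed_UN[of "\<lambda>n. Cl_n C n E"] by blast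
qed

lemma coprod_closed_over_Cl_hat:
  assumes "collection J" "iso_closed J" "restriction_closed J"
    and "collection Cc" "coprod_closed_over Cc J" "collection E" "coprod_closed_over E J"
  shows "coprod_closed_over (Cl_hat Cc E) J"
proof -
  have "collection (Cl_n Cc n E) \<and> coprod_closed_over (Cl_n Cc n E) J" for n
  proof (induction n)
    case (Suc n)
    then show ?case
      using collection_Cl_step coprod_closed_over_Cl_step[OF assms(1-5)] by simp
  qed (use assms in simp)
  then show ?thesis
    unfolding Cl_hat_conv_UN using coprod_closed_over_UN[of "\<lambda>n. Cl_n Cc n E"] by blast
qed

lemma Cl_hat_least:
  assumes K: "iso_closed K" "coprod_closed_over K K" and CE: "C \<le> K" "E \<le> K"
  shows "Cl_hat C E \<le> K"
proof -
  have "Cl_n C n E V \<subseteq> K V" for n V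
  proof (induction n arbitrary: V)
    case 0
    then show ?case
      using CE(2) by (simp add: le_fun_def)
  next
    case (Suc n)
    show ?case
    proof
      fix X assume "X \<in> Cl_n C (Suc n) E V"
      then have "X \<in> Cl_step C (Cl_n C n E) V"
        by simp
      then obtain S Ts where V: "V \<in> Ob" and X: "sobj V X" "siso (coprod_over S Ts) X"
        and S: "S \<in> C V" and Ts: "length Ts = length S"
          "\<forall>i<length S. Ts ! i \<in> Cl_n C n E (fst (S ! i))"
        using Cl_stepE by metis
      have "S \<in> K V"
        using CE(1) S by (auto simp: le_fun_def)
      moreover have "\<forall>i<length S. Ts ! i \<in> K (fst (S ! i))"
        using Ts(2) Suc.IH by blast
      ultimately have "coprod_over S Ts \<in> K V"
        using K(2) V Ts(1) unfolding coprod_closed_over_def by blast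
      then show "X \<in> K V"
        using K(1) V X unfolding iso_closed_def by blast
    qed
  qed
  then show ?thesis
    unfolding Cl_hat_conv_UN le_fun_def by blast
qed

lemma Cl_hat_nonempty: "Cl_hat C E V \<noteq> {} \<Longrightarrow> E V \<noteq> {} \<or> C V \<noteq> {}"
proof -
  have "Cl_n C n E V \<noteq> {} \<Longrightarrow> E V \<noteq> {} \<or> C V \<noteq> {}" for n
  proof (induction n)
    case (Suc n)
    then obtain X where "X \<in> Cl_step C (Cl_n C n E) V"
      by auto
    then obtain S where "S \<in> C V"
      using Cl_stepE by metis
    then show ?case
      by blast
  qed simp
  then show "Cl_hat C E V \<noteq> {} \<Longrightarrow> E V \<noteq> {} \<or> C V \<noteq> {}"
    unfolding Cl_hat_conv_UN by blast
qed

subsection \<open>Meets and joins\<close>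

lemma is_wIndSys_inter:
  assumes "is_wIndSys C" "is_wIndSys D"
  shows "is_wIndSys (\<lambda>V. C V \<inter> D V)"
proof -
  have C: "collection C" "iso_closed C" "restriction_closed C" "contains_terminals C"
    "coprod_closed_over C C"
    and D: "collection D" "iso_closed D" "restriction_closed D" "contains_terminals D"
      "coprod_closed_over D D"
    using assms is_wIndSys_iff by auto
  have "collection (\<lambda>V. C V \<inter> D V)"
    using C(1) unfolding collection_def by blast
  moreover have "iso_closed (\<lambda>V. C V \<inter> D V)"
    unfolding iso_closed_def
  proof (intro ballI allI impI)
    fix V S S' assume "V \<in> Ob" "S \<in> C V \<inter> D V \<and> sobj V S' \<and> siso S S'"
    then show "S' \<in> C V \<inter> D V"
      using C(2) D(2) unfolding iso_closed_def by blast
  qed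
  moreover have "restriction_closed (\<lambda>V. C V \<inter> D V)"
    unfolding restriction_closed_def
  proof (intro ballI allI impI)
    fix V U a S P p1 p2 assume "V \<in> Ob" "U \<in> Ob" "a \<in> Hom U V" "S \<in> C V \<inter> D V"
      "is_pullback (map fst S) [U] (str S) [(0, a)] P p1 p2"
    then show "zip P (map snd p2) \<in> C U \<inter> D U"
      using C(3) D(3) unfolding restriction_closed_def by blast
  qed
  moreover have "contains_terminals (\<lambda>V. C V \<inter> D V)"
    using C(4) D(4) unfolding contains_terminals_def by blast
  moreover have "coprod_closed_over (\<lambda>V. C V \<inter> D V) (\<lambda>V. C V \<inter> D V)"
    unfolding coprod_closed_over_def
  proof (intro ballI allI impI)
    fix V S Ts assume "V \<in> Ob" "S \<in> C V \<inter> D V"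
      "length Ts = length S \<and> (\<forall>i<length S. Ts ! i \<in> C (fst (S ! i)) \<inter> D (fst (S ! i)))"
    then show "coprod_over S Ts \<in> C V \<inter> D V"
      using C(5) D(5) unfolding coprod_closed_over_def by auto
  qed
  ultimately show ?thesis
    using is_wIndSys_iff by blast
qed

definition join_stage ::
  "('o \<Rightarrow> ('o \<times> 'm) list set) \<Rightarrow> ('o \<Rightarrow> ('o \<times> 'm) list set) \<Rightarrow> nat \<Rightarrow> 'o \<Rightarrow> ('o \<times> 'm) list set" where
  "join_stage C D n = ((\<lambda>E. Cl_hat C (Cl_hat D E)) ^^ n) (\<lambda>W. C W \<union> D W)"

lemma join_stage_0 [simp]: "join_stage C D 0 = (\<lambda>W. C W \<union> D W)"
  by (simp add: join_stage_def)

lemma join_stage_Suc [simp]: "join_stage C D (Suc n) = Cl_hat C (Cl_hat D (join_stage C D n))"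
  by (simp add: join_stage_def)

lemma join_formula_conv_UN: "join_formula C D = (\<lambda>V. \<Union>n. join_stage C D n V)"
  by (rule ext) (simp add: join_formula_def join_stage_def)

lemma join_stage_subset_join_formula: "join_stage C D n V \<subseteq> join_formula C D V"
  unfolding join_formula_conv_UN by blast

lemma join_stage_mono: "m \<le> n \<Longrightarrow> join_stage C D m V \<subseteq> join_stage C D n V"
proof (rule lift_Suc_mono_le[of "\<lambda>n. join_stage C D n V"])
  show "join_stage C D n V \<subseteq> join_stage C D (Suc n) V" for n
    using subset_Cl_hat[of "join_stage C D n" V D]
      subset_Cl_hat[of "Cl_hat D (join_stage C D n)" V C]
    by simp
qed

lemma join_stage_common:
  assumes "\<forall>i<length S. R ! i \<in> join_formula C D (fst (S ! i))"
  obtains N where "\<forall>i<length S. R ! i \<in> join_stage C D N (fst (S ! i))"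
proof -
  have "\<forall>i. \<exists>n. i < length S \<longrightarrow> R ! i \<in> join_stage C D n (fst (S ! i))"
    using assms unfolding join_formula_conv_UN by blast
  then obtain f where f: "\<forall>i<length S. R ! i \<in> join_stage C D (f i) (fst (S ! i))"
    by metis
  have "f i \<le> (\<Sum>j<length S. f j)" if "i < length S" for i
    using that by (intro member_le_sum) auto
  then have "\<forall>i<length S. R ! i \<in> join_stage C D (\<Sum>j<length S. f j) (fst (S ! i))"
    using f join_stage_mono by blast
  then show ?thesis
    using that by blast
qed

context
  fixes C D :: "'o \<Rightarrow> ('o \<times> 'm) list set"
  assumes C: "is_wIndSys C" and D: "is_wIndSys D"
begin

lemma wIndSys_components:
  "collection C" "iso_closed C" "restriction_closed C" "contains_terminals C"
  "coprod_closed_over C C"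
  "collection D" "iso_closed D" "restriction_closed D" "contains_terminals D"
  "coprod_closed_over D D"
  using C D by (simp_all add: is_wIndSys_iff)

lemma join_stage_closed:
  "collection (join_stage C D n) \<and> iso_closed (join_stage C D n) \<and>
   restriction_closed (join_stage C D n)"
proof (induction n)
  case 0
  then show ?case
    using collection_Un iso_closed_Un restriction_closed_Un wIndSys_components by simp
next
  case (Suc n)
  then have "collection (Cl_hat D (join_stage C D n)) \<and> iso_closed (Cl_hat D (join_stage C D n))
      \<and> restriction_closed (Cl_hat D (join_stage C D n))"
    using Cl_hat_closed[OF wIndSys_components(6,8)] by blast
  then show ?case
    using Cl_hat_closed[OF wIndSys_components(1,3)] by simp
qed

lemma join_formula_closed:
  "collection (join_formula C D) \<and> iso_closed (join_formula C D) \<and>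
   restriction_closed (join_formula C D)"
  unfolding join_formula_conv_UN
  using collection_UN[of "join_stage C D"] iso_closed_UN[of "join_stage C D"]
    restriction_closed_UN[of "join_stage C D"] join_stage_closed by blast


lemma coprod_closed_over_join_base:
  "coprod_closed_over C (join_formula C D)" "coprod_closed_over D (join_formula C D)"
proof -
  note J = join_formula_closed and stages = join_stage_closed
  have step: "coprod_over S R \<in> join_formula C D V"
    if K: "collection K" "S \<in> K V"
      and R: "length R = length S" "\<forall>i<length S. R ! i \<in> join_formula C D (fst (S ! i))"
      and sub: "\<And>N. Cl_step K (join_stage C D N) V \<subseteq> join_stage C D (Suc N) V"
    for K S V R
  proof -
    obtain N where "\<forall>i<length S. R ! i \<in> join_stage C D N (fst (S ! i))"
      using join_stage_common[OF R(2)] .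
    then have "coprod_over S R \<in> Cl_step K (join_stage C D N) V"
      using coprod_over_in_Cl_step[OF K(1) _ K(2) R(1)] stages by blast
    then show ?thesis
      using sub join_stage_subset_join_formula by blast
  qed
  have "Cl_step C (join_stage C D N) V \<subseteq> join_stage C D (Suc N) V" for N V
  proof -
    have "Cl_step C (join_stage C D N) V \<subseteq> Cl_step C (Cl_hat D (join_stage C D N)) V"
      using Cl_step_mono[OF subset_Cl_hat] .
    then show ?thesis
      using Cl_step_subset_Cl_hat[of C "Cl_hat D (join_stage C D N)" V] by simp
  qed
  then show "coprod_closed_over C (join_formula C D)"
    unfolding coprod_closed_over_def using step wIndSys_components(1) by blast
  have "Cl_step D (join_stage C D N) V \<subseteq> join_stage C D (Suc N) V" for N V
    using Cl_step_subset_Cl_hat[of D "join_stage C D N" V]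
      subset_Cl_hat[of "Cl_hat D (join_stage C D N)" V C] by simp
  then show "coprod_closed_over D (join_formula C D)"
    unfolding coprod_closed_over_def using step wIndSys_components(6) by blast
qed

lemma coprod_closed_join_formula: "coprod_closed_over (join_formula C D) (join_formula C D)"
proof -
  have J: "collection (join_formula C D)" "iso_closed (join_formula C D)"
    "restriction_closed (join_formula C D)"
    using join_formula_closed by auto
  have "coprod_closed_over (join_stage C D n) (join_formula C D)" for n
  proof (induction n)
    case 0
    then show ?case
      using coprod_closed_over_Un[OF coprod_closed_over_join_base] by simp
  next
    case (Suc n)
    have stage: "collection (join_stage C D n)" "iso_closed (join_stage C D n)"
      "restriction_closed (join_stage C D n)"
      using join_stage_closed by auto
    have "coprod_closed_over (Cl_hat D (join_stage C D n)) (join_formula C D)"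
      using coprod_closed_over_Cl_hat[OF J wIndSys_components(6) coprod_closed_over_join_base(2)
          stage(1) Suc.IH] .
    moreover have "collection (Cl_hat D (join_stage C D n))"
      using Cl_hat_closed[OF wIndSys_components(6,8) stage] by blast
    ultimately show ?case
      using coprod_closed_over_Cl_hat[OF J wIndSys_components(1) coprod_closed_over_join_base(1)]
        by simp
  qed
  then show ?thesis
    unfolding join_formula_conv_UN using coprod_closed_over_UN[of "join_stage C D"] by blast
qed

lemma contains_terminals_join_formula: "contains_terminals (join_formula C D)"
  unfolding contains_terminals_def
proof (intro ballI impI)
  fix V assume V: "V \<in> Ob" and "join_formula C D V \<noteq> {}"
  then obtain n where "join_stage C D n V \<noteq> {}"
    unfolding join_formula_conv_UN by blast
  moreover have "join_stage C D n V \<noteq> {} \<Longrightarrow> C V \<noteq> {} \<or> D V \<noteq> {}" for n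
  proof (induction n)
    case (Suc n)
    then show ?case
      using Cl_hat_nonempty[of C "Cl_hat D (join_stage C D n)" V]
        Cl_hat_nonempty[of D "join_stage C D n" V]
      by auto
  qed simp
  ultimately have "C V \<noteq> {} \<or> D V \<noteq> {}"
    by blast
  then have "terminal V \<in> join_stage C D 0 V"
    using wIndSys_components(4,9) V unfolding contains_terminals_def by auto
  then show "terminal V \<in> join_formula C D V"
    using join_stage_subset_join_formula by blast
qed

lemma is_wIndSys_join_formula: "is_wIndSys (join_formula C D)"
  using join_formula_closed contains_terminals_join_formula coprod_closed_join_formula
  by (simp add: is_wIndSys_iff)

lemma join_formula_upper: "C \<le> join_formula C D" "D \<le> join_formula C D"
  using join_stage_subset_join_formula[of C D 0] by (auto simp: le_fun_def)

lemma join_formula_least: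
  assumes "is_wIndSys E" "C \<le> E" "D \<le> E"
  shows "join_formula C D \<le> E"
proof -
  have E: "iso_closed E" "coprod_closed_over E E"
    using assms(1) by (simp_all add: is_wIndSys_iff)
  have "join_stage C D n \<le> E" for n
  proof (induction n)
    case 0
    then show ?case
      using assms(2,3) by (simp add: le_fun_def)
  next
    case (Suc n)
    then show ?case
      using Cl_hat_least[OF E assms(2) Cl_hat_least[OF E assms(3) Suc.IH]] by simp
  qed
  then show ?thesis
    unfolding join_formula_conv_UN le_fun_def by blast
qed

end

end

theorem mainTheorem10:
  fixes Ob :: "'o set" and Hom :: "'o \<Rightarrow> 'o \<Rightarrow> 'm set"
    and cmp :: "'m \<Rightarrow> 'm \<Rightarrow> 'm" and idm :: "'o \<Rightarrow> 'm"
    and C D :: "'o \<Rightarrow> ('o \<times> 'm) list set"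
  assumes "category Ob Hom cmp idm"
    and "cat_data.orbital Ob Hom cmp"
    and "cat_data.is_wIndSys Ob Hom cmp idm C"
    and "cat_data.is_wIndSys Ob Hom cmp idm D"
  shows "cat_data.is_wIndSys Ob Hom cmp idm (\<lambda>V. C V \<inter> D V)
       \<and> (\<lambda>V. C V \<inter> D V) \<le> C \<and> (\<lambda>V. C V \<inter> D V) \<le> D
       \<and> (\<forall>E. cat_data.is_wIndSys Ob Hom cmp idm E \<and> E \<le> C \<and> E \<le> D
              \<longrightarrow> E \<le> (\<lambda>V. C V \<inter> D V))
       \<and> cat_data.is_wIndSys Ob Hom cmp idm (cat_data.join_formula Ob Hom cmp idm C D)
       \<and> C \<le> cat_data.join_formula Ob Hom cmp idm C D
       \<and> D \<le> cat_data.join_formula Ob Hom cmp idm C D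
       \<and> (\<forall>E. cat_data.is_wIndSys Ob Hom cmp idm E \<and> C \<le> E \<and> D \<le> E
              \<longrightarrow> cat_data.join_formula Ob Hom cmp idm C D \<le> E)"
proof -
  interpret orbital_category Ob Hom cmp idm
    using assms(1,2) by unfold_locales
  show ?thesis
    using is_wIndSys_inter[OF assms(3,4)] is_wIndSys_join_formula[OF assms(3,4)]
      join_formula_upper[OF assms(3,4)] join_formula_least[OF assms(3,4)]
    by (auto simp: le_fun_def)
qed

end
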